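(* Let $C$ be a quantum circuit comprised of $d$ layers of nearest-neighbor two-qubit gates on a $D$-dimensional lattice $\Lambda$, let $H$ be its parent Hamiltonian and $\beta>0$. Then for any pairwise disjoint $A,B,C'\subseteq\Lambda$ with $X=A\cup B\cup C'$ and lattice distance $d(A,C')\ge 4d+1$, the Gibbs states satisfy local indistinguishability: $\mathrm{Tr}_{BC'}\rho^X=\mathrm{Tr}_B\rho^{AB}$.
   Context: $H=\sum_{i\in\Lambda}h_i$ with $h_i=C(|1\rangle\langle1|_i\otimes\mathbb I)C^\dagger$. For $Y\subseteq\Lambda$, $H_Y=\sum_{i:\,\mathrm{supp}(h_i)\subseteq Y}h_i$ (the terms entirely contained in $Y$) and $\rho^Y=e^{-\beta H_Y}/\mathrm{Tr}\,e^{-\beta H_Y}$, a state on the qubits of $Y$; $AB$ denotes $A\cup B$. The distance $d(A,C')=\min_{i\in A,j\in C'}d(i,j)$ is the graph (path-length) distance on the lattice. *)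

theory Defs
  imports Complex_Main "HOL-Library.Extended_Nat"
begin

text \<open>A computational basis state of the qubits in a set Y of
  sites is a configuration: a function from sites to bool that is False outside Y.
  An operator on the qubits of Y is a complex-valued function on pairs of configurations
  (its matrix in the computational basis); only values on configurations of Y matter.\<close>

type_synonym 's qop = "('s \<Rightarrow> bool) \<Rightarrow> ('s \<Rightarrow> bool) \<Rightarrow> complex"

definition configs :: "'s set \<Rightarrow> ('s \<Rightarrow> bool) set" where
  "configs Y = {\<sigma>. \<forall>i. i \<notin> Y \<longrightarrow> \<not> \<sigma> i}"

definition op_mult :: "'s set \<Rightarrow> 's qop \<Rightarrow> 's qop \<Rightarrow> 's qop" where
  "op_mult Y P Q = (\<lambda>\<sigma> \<tau>. \<Sum>\<mu>\<in>configs Y. P \<sigma> \<mu> * Q \<mu> \<tau>)"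

definition op_id :: "'s set \<Rightarrow> 's qop" where
  "op_id Y = (\<lambda>\<sigma> \<tau>. if \<sigma> = \<tau> \<and> \<sigma> \<in> configs Y then 1 else 0)"

definition op_adj :: "'s qop \<Rightarrow> 's qop" where
  "op_adj P = (\<lambda>\<sigma> \<tau>. cnj (P \<tau> \<sigma>))"

fun op_pow :: "'s set \<Rightarrow> 's qop \<Rightarrow> nat \<Rightarrow> 's qop" where
  "op_pow Y P 0 = op_id Y"
| "op_pow Y P (Suc n) = op_mult Y (op_pow Y P n) P"

definition op_exp :: "'s set \<Rightarrow> 's qop \<Rightarrow> 's qop" where
  "op_exp Y P = (\<lambda>\<sigma> \<tau>. \<Sum>k. op_pow Y P k \<sigma> \<tau> / of_nat (fact k))"

definition op_trace :: "'s set \<Rightarrow> 's qop \<Rightarrow> complex" where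
  "op_trace Y P = (\<Sum>\<sigma>\<in>configs Y. P \<sigma> \<sigma>)"

definition unitary_on :: "'s set \<Rightarrow> 's qop \<Rightarrow> bool" where
  "unitary_on Y U \<longleftrightarrow> (\<forall>\<sigma>\<in>configs Y. \<forall>\<tau>\<in>configs Y.
      op_mult Y U (op_adj U) \<sigma> \<tau> = op_id Y \<sigma> \<tau> \<and> op_mult Y (op_adj U) U \<sigma> \<tau> = op_id Y \<sigma> \<tau>)"

definition merge :: "'s set \<Rightarrow> ('s \<Rightarrow> bool) \<Rightarrow> ('s \<Rightarrow> bool) \<Rightarrow> ('s \<Rightarrow> bool)" where
  "merge S \<mu> \<sigma> = (\<lambda>i. if i \<in> S then \<mu> i else \<sigma> i)"

definition restr :: "'s set \<Rightarrow> ('s \<Rightarrow> bool) \<Rightarrow> ('s \<Rightarrow> bool)" where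
  "restr S \<sigma> = (\<lambda>i. i \<in> S \<and> \<sigma> i)"

definition ptrace :: "'s set \<Rightarrow> 's qop \<Rightarrow> 's qop" where
  "ptrace S P = (\<lambda>\<sigma> \<tau>. \<Sum>\<mu>\<in>configs S. P (merge S \<mu> \<sigma>) (merge S \<mu> \<tau>))"

text \<open>Embedding an operator U on the qubits of S into the qubits of Lam: U tensor identity.\<close>
definition ext_op :: "'s set \<Rightarrow> 's set \<Rightarrow> 's qop \<Rightarrow> 's qop" where
  "ext_op Lam S U = (\<lambda>\<sigma> \<tau>. if \<sigma> \<in> configs Lam \<and> \<tau> \<in> configs Lam \<and> (\<forall>k. k \<notin> S \<longrightarrow> \<sigma> k = \<tau> k)
      then U (restr S \<sigma>) (restr S \<tau>) else 0)"

definition acts_within :: "'s set \<Rightarrow> 's set \<Rightarrow> 's qop \<Rightarrow> bool" where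
  "acts_within Lam S h \<longleftrightarrow> (\<exists>U. \<forall>\<sigma>\<in>configs Lam. \<forall>\<tau>\<in>configs Lam. h \<sigma> \<tau> = ext_op Lam S U \<sigma> \<tau>)"

definition op_supp :: "'s set \<Rightarrow> 's qop \<Rightarrow> 's set" where
  "op_supp Lam h = \<Inter>{S. S \<subseteq> Lam \<and> acts_within Lam S h}"

definition proj1 :: "'s set \<Rightarrow> 's \<Rightarrow> 's qop" where
  "proj1 Lam i = (\<lambda>\<sigma> \<tau>. if \<sigma> = \<tau> \<and> \<sigma> \<in> configs Lam \<and> \<sigma> i then 1 else 0)"

text \<open>Sites of the D-dimensional lattice are integer vectors (lists of length D).\<close>
type_synonym site = "int list"

definition lat_adjacent :: "site \<Rightarrow> site \<Rightarrow> bool" where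
  "lat_adjacent x y \<longleftrightarrow> length x = length y \<and> (\<Sum>k<length x. \<bar>x ! k - y ! k\<bar>) = 1"

definition lat_edges :: "site set \<Rightarrow> (site \<times> site) set" where
  "lat_edges Lam = {(x, y). x \<in> Lam \<and> y \<in> Lam \<and> lat_adjacent x y}"

definition lat_dist :: "site set \<Rightarrow> site \<Rightarrow> site \<Rightarrow> enat" where
  "lat_dist Lam x y = (if \<exists>k. (x, y) \<in> lat_edges Lam ^^ k
      then enat (LEAST k. (x, y) \<in> lat_edges Lam ^^ k) else \<infinity>)"

text \<open>A gate (i, j, U): a two-qubit unitary U acting on the qubits at sites i and j.\<close>
type_synonym gate = "site \<times> site \<times> site qop"
type_synonym layer = "gate list"

definition gate_sites :: "gate \<Rightarrow> site set" where
  "gate_sites g = {fst g, fst (snd g)}"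

definition valid_gate :: "site set \<Rightarrow> gate \<Rightarrow> bool" where
  "valid_gate Lam g \<longleftrightarrow> (case g of (i, j, U) \<Rightarrow>
      i \<in> Lam \<and> j \<in> Lam \<and> lat_adjacent i j \<and> unitary_on {i, j} U)"

definition valid_layer :: "site set \<Rightarrow> layer \<Rightarrow> bool" where
  "valid_layer Lam L \<longleftrightarrow> (\<forall>g\<in>set L. valid_gate Lam g) \<and>
      (\<forall>a<length L. \<forall>b<length L. a \<noteq> b \<longrightarrow> gate_sites (L ! a) \<inter> gate_sites (L ! b) = {})"

definition layer_op :: "site set \<Rightarrow> layer \<Rightarrow> site qop" where
  "layer_op Lam L = foldr (\<lambda>g acc. op_mult Lam (ext_op Lam (gate_sites g) (snd (snd g))) acc) L (op_id Lam)"

text \<open>Circuit [L_1, ..., L_d] has unitary C = L_d ... L_1.\<close>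
definition circuit_op :: "site set \<Rightarrow> layer list \<Rightarrow> site qop" where
  "circuit_op Lam Ls = fold (\<lambda>L acc. op_mult Lam (layer_op Lam L) acc) Ls (op_id Lam)"

definition parent_term :: "site set \<Rightarrow> layer list \<Rightarrow> site \<Rightarrow> site qop" where
  "parent_term Lam Ls i = op_mult Lam (op_mult Lam (circuit_op Lam Ls) (proj1 Lam i)) (op_adj (circuit_op Lam Ls))"

definition H_sub :: "site set \<Rightarrow> layer list \<Rightarrow> site set \<Rightarrow> site qop" where
  "H_sub Lam Ls Y = (\<lambda>\<sigma> \<tau>. \<Sum>i\<in>{i\<in>Lam. op_supp Lam (parent_term Lam Ls i) \<subseteq> Y}. parent_term Lam Ls i \<sigma> \<tau>)"

definition gibbs_sub :: "site set \<Rightarrow> layer list \<Rightarrow> real \<Rightarrow> site set \<Rightarrow> site qop" where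
  "gibbs_sub Lam Ls \<beta> Y =
     (let E = op_exp Y (\<lambda>\<sigma> \<tau>. - complex_of_real \<beta> * H_sub Lam Ls Y \<sigma> \<tau>)
      in (\<lambda>\<sigma> \<tau>. E \<sigma> \<tau> / op_trace Y E))"

end

theory Submission
  imports Defs
begin

text \<open>Conjugation by the circuit C diagonalises every H_Y in the computational basis:
  H_Y = C (\<Sum>i\<in>S_Y. n_i) C* with n_i = |1><1|_i, where S_Y is the set of sites whose term
  h_i is supported in Y. Hence exp(-\<beta> H_Y) = C D_Y C* with D_Y diagonal with Boltzmann
  weights, and a matrix entry of the reduced state on A is the D_Y-average of the diagonal of
  C* (|\<tau>><\<sigma>|_A \<otimes> I) C. That operator is supported in the d-neighbourhood L of A, because
  a depth-d circuit has a light cone of radius d, and the weights factorise over L and its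
  complement; so the reduced state only depends on S_Y \<inter> L. A term h_i with i \<in> L is
  supported within distance 2d of A, so adding a region C' at distance more than 2d from A to Y
  does not change S_Y \<inter> L.\<close>

lemma configs_iff: "\<sigma> \<in> configs S \<longleftrightarrow> (\<forall>i. \<sigma> i \<longrightarrow> i \<in> S)"
  unfolding configs_def by auto

lemma configs_mono: "S \<subseteq> T \<Longrightarrow> configs S \<subseteq> configs T"
  by (auto simp: configs_def)

lemma bot_in_configs [simp]: "(\<lambda>_. False) \<in> configs S"
  by (simp add: configs_iff)

lemma restr_in_configs [simp]: "restr S \<sigma> \<in> configs S"
  by (auto simp: restr_def configs_iff)

lemma restr_in_configs_superset: "\<sigma> \<in> configs Lam \<Longrightarrow> restr S \<sigma> \<in> configs Lam"
  by (auto simp: restr_def configs_iff)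

lemma merge_in_configs: "\<mu> \<in> configs S \<Longrightarrow> \<sigma> \<in> configs T \<Longrightarrow> merge S \<mu> \<sigma> \<in> configs (S \<union> T)"
  by (auto simp: merge_def configs_iff)

lemma merge_in_configs_superset:
  "\<mu> \<in> configs S \<Longrightarrow> \<sigma> \<in> configs Lam \<Longrightarrow> S \<subseteq> Lam \<Longrightarrow> merge S \<mu> \<sigma> \<in> configs Lam"
  by (auto simp: merge_def configs_iff)

lemma restr_merge: "\<mu> \<in> configs S \<Longrightarrow> restr S (merge S \<mu> \<sigma>) = \<mu>"
  by (auto simp: restr_def merge_def configs_iff)

lemma restr_id: "\<sigma> \<in> configs S \<Longrightarrow> restr S \<sigma> = \<sigma>"
  by (auto simp: restr_def configs_iff)

lemma restr_restr: "restr S (restr T \<sigma>) = restr (S \<inter> T) \<sigma>"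
  by (auto simp: restr_def)

lemma restr_idem [simp]: "restr S (restr S \<sigma>) = restr S \<sigma>"
  by (simp add: restr_def)

lemma merge_bot: "\<mu> \<in> configs S \<Longrightarrow> merge S \<mu> (\<lambda>_. False) = \<mu>"
  by (auto simp: merge_def configs_iff)

lemma configs_eq_image_Pow: "configs S = (\<lambda>T i. i \<in> T) ` Pow S"
proof
  show "configs S \<subseteq> (\<lambda>T i. i \<in> T) ` Pow S"
  proof
    fix \<sigma> assume "\<sigma> \<in> configs S"
    then have "{i. \<sigma> i} \<in> Pow S" "\<sigma> = (\<lambda>i. i \<in> {i. \<sigma> i})" by (auto simp: configs_iff)
    then show "\<sigma> \<in> (\<lambda>T i. i \<in> T) ` Pow S" by blast
  qed
qed (auto simp: configs_iff)

lemma finite_configs: "finite S \<Longrightarrow> finite (configs S)"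
  by (simp add: configs_eq_image_Pow)

lemma card_configs:
  assumes "finite S"
  shows "card (configs S) = 2 ^ card S"
proof -
  have "inj_on (\<lambda>T i. i \<in> T) (Pow S)"
    by (rule inj_onI) (metis Collect_mem_eq)
  then show ?thesis
    using assms by (simp add: configs_eq_image_Pow card_image card_Pow)
qed

lemma sum_configs_Un:
  assumes "finite P" "finite Q" "P \<inter> Q = {}"
  shows "(\<Sum>\<mu>\<in>configs (P \<union> Q). f \<mu>) = (\<Sum>\<mu>\<in>configs P. \<Sum>\<nu>\<in>configs Q. f (merge P \<mu> \<nu>))"
proof -
  have "bij_betw (\<lambda>(\<mu>, \<nu>). merge P \<mu> \<nu>) (configs P \<times> configs Q) (configs (P \<union> Q))"
  proof (rule bij_betw_byWitness[where f' = "\<lambda>\<mu>. (restr P \<mu>, restr Q \<mu>)"])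
    show "\<forall>x\<in>configs P \<times> configs Q. (\<lambda>\<mu>. (restr P \<mu>, restr Q \<mu>)) ((\<lambda>(\<mu>, \<nu>). merge P \<mu> \<nu>) x) = x"
      using assms(3) by (fastforce simp: restr_def merge_def configs_iff)
    show "\<forall>\<mu>\<in>configs (P \<union> Q). (\<lambda>(\<mu>, \<nu>). merge P \<mu> \<nu>) (restr P \<mu>, restr Q \<mu>) = \<mu>"
      by (auto simp: restr_def merge_def configs_iff fun_eq_iff)
  qed (auto intro: merge_in_configs)
  then have "(\<Sum>\<mu>\<in>configs (P \<union> Q). f \<mu>) = (\<Sum>(\<mu>, \<nu>)\<in>configs P \<times> configs Q. f (merge P \<mu> \<nu>))"
    by (simp add: sum.reindex_bij_betw[symmetric] case_prod_unfold)
  then show ?thesis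
    by (simp add: sum.cartesian_product)
qed

subsection \<open>Operators supported in a set of sites\<close>

definition agree_outside :: "'s set \<Rightarrow> ('s \<Rightarrow> bool) \<Rightarrow> ('s \<Rightarrow> bool) \<Rightarrow> bool" where
  "agree_outside S \<sigma> \<tau> \<longleftrightarrow> (\<forall>k. k \<notin> S \<longrightarrow> \<sigma> k = \<tau> k)"

definition supported_in :: "'s set \<Rightarrow> 's set \<Rightarrow> 's qop \<Rightarrow> bool" where
  "supported_in Lam S P \<longleftrightarrow> (\<forall>\<sigma>\<in>configs Lam. \<forall>\<tau>\<in>configs Lam.
     P \<sigma> \<tau> = (if agree_outside S \<sigma> \<tau> then P (restr S \<sigma>) (restr S \<tau>) else 0))"

lemma agree_outside_commute: "agree_outside S \<sigma> \<tau> \<longleftrightarrow> agree_outside S \<tau> \<sigma>"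
  by (auto simp: agree_outside_def)

lemma agree_outside_restr [simp]: "agree_outside S (restr S \<sigma>) (restr S \<tau>)"
  by (simp add: agree_outside_def restr_def)

lemma agree_outside_merge [simp]: "agree_outside S (merge S \<mu> \<sigma>) \<sigma>"
  by (simp add: agree_outside_def merge_def)

lemma sum_configs_agree_outside:
  assumes "finite Lam" "S \<subseteq> Lam" "\<sigma> \<in> configs Lam"
  shows "(\<Sum>\<mu>\<in>configs Lam. if agree_outside S \<mu> \<sigma> then f \<mu> else 0) = (\<Sum>\<nu>\<in>configs S. f (merge S \<nu> \<sigma>))"
proof -
  have "{\<mu> \<in> configs Lam. agree_outside S \<mu> \<sigma>} = (\<lambda>\<nu>. merge S \<nu> \<sigma>) ` configs S"
  proof
    show "{\<mu> \<in> configs Lam. agree_outside S \<mu> \<sigma>} \<subseteq> (\<lambda>\<nu>. merge S \<nu> \<sigma>) ` configs S"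
    proof
      fix \<mu> assume "\<mu> \<in> {\<mu> \<in> configs Lam. agree_outside S \<mu> \<sigma>}"
      then have "\<mu> = merge S (restr S \<mu>) \<sigma>"
        by (auto simp: merge_def restr_def agree_outside_def)
      then show "\<mu> \<in> (\<lambda>\<nu>. merge S \<nu> \<sigma>) ` configs S" by force
    qed
  qed (auto intro: merge_in_configs_superset[OF _ assms(3,2)])
  moreover have "inj_on (\<lambda>\<nu>. merge S \<nu> \<sigma>) (configs S)"
    by (rule inj_onI) (metis restr_merge)
  ultimately show ?thesis
    using assms(1) by (simp add: sum.inter_filter[symmetric] finite_configs sum.reindex)
qed

lemma supported_inD:
  "supported_in Lam S P \<Longrightarrow> \<sigma> \<in> configs Lam \<Longrightarrow> \<tau> \<in> configs Lam \<Longrightarrow>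
     P \<sigma> \<tau> = (if agree_outside S \<sigma> \<tau> then P (restr S \<sigma>) (restr S \<tau>) else 0)"
  unfolding supported_in_def by blast

lemma supported_in_eqI:
  assumes "supported_in Lam S P" "\<sigma> \<in> configs Lam" "\<tau> \<in> configs Lam" "\<sigma>' \<in> configs Lam" "\<tau>' \<in> configs Lam"
    and "agree_outside S \<sigma> \<tau> \<longleftrightarrow> agree_outside S \<sigma>' \<tau>'" "restr S \<sigma> = restr S \<sigma>'" "restr S \<tau> = restr S \<tau>'"
  shows "P \<sigma> \<tau> = P \<sigma>' \<tau>'"
  using supported_inD[OF assms(1,2,3)] supported_inD[OF assms(1,4,5)] assms(6-8) by simp

lemma supported_in_zero:
  "supported_in Lam S P \<Longrightarrow> \<sigma> \<in> configs Lam \<Longrightarrow> \<tau> \<in> configs Lam \<Longrightarrow> \<not> agree_outside S \<sigma> \<tau> \<Longrightarrow> P \<sigma> \<tau> = 0"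
  using supported_inD by fastforce

lemma supported_in_cong:
  assumes "supported_in Lam S P" "\<And>\<sigma> \<tau>. \<sigma> \<in> configs Lam \<Longrightarrow> \<tau> \<in> configs Lam \<Longrightarrow> P \<sigma> \<tau> = Q \<sigma> \<tau>"
  shows "supported_in Lam S Q"
  unfolding supported_in_def
proof (intro ballI)
  fix \<sigma> \<tau> assume "\<sigma> \<in> configs Lam" "\<tau> \<in> configs Lam"
  then show "Q \<sigma> \<tau> = (if agree_outside S \<sigma> \<tau> then Q (restr S \<sigma>) (restr S \<tau>) else 0)"
    using supported_inD[OF assms(1)] assms(2) restr_in_configs_superset by metis
qed

lemma supported_in_mono:
  assumes P: "supported_in Lam S P" and "S \<subseteq> S'"
  shows "supported_in Lam S' P"
  unfolding supported_in_def
proof (intro ballI)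
  fix \<sigma> \<tau> assume s: "\<sigma> \<in> configs Lam" "\<tau> \<in> configs Lam"
  have r: "restr S' \<sigma> \<in> configs Lam" "restr S' \<tau> \<in> configs Lam"
    using s restr_in_configs_superset by auto
  have rr: "restr S (restr S' \<sigma>) = restr S \<sigma>" "restr S (restr S' \<tau>) = restr S \<tau>"
    using \<open>S \<subseteq> S'\<close> by (auto simp: restr_restr Int_absorb2)
  have "agree_outside S \<sigma> \<tau> \<longleftrightarrow> agree_outside S' \<sigma> \<tau> \<and> agree_outside S (restr S' \<sigma>) (restr S' \<tau>)"
    using \<open>S \<subseteq> S'\<close> by (auto simp: agree_outside_def restr_def)
  then show "P \<sigma> \<tau> = (if agree_outside S' \<sigma> \<tau> then P (restr S' \<sigma>) (restr S' \<tau>) else 0)"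
    using supported_inD[OF P s] supported_inD[OF P r] rr by auto
qed

lemma supported_in_Int:
  assumes P: "supported_in Lam S P" and Q: "supported_in Lam T P"
  shows "supported_in Lam (S \<inter> T) P"
  unfolding supported_in_def
proof (intro ballI)
  fix \<sigma> \<tau> assume s: "\<sigma> \<in> configs Lam" "\<tau> \<in> configs Lam"
  show "P \<sigma> \<tau> = (if agree_outside (S \<inter> T) \<sigma> \<tau> then P (restr (S \<inter> T) \<sigma>) (restr (S \<inter> T) \<tau>) else 0)"
  proof (cases "agree_outside (S \<inter> T) \<sigma> \<tau>")
    case True
    then have "agree_outside S \<sigma> \<tau>" "agree_outside T (restr S \<sigma>) (restr S \<tau>)"
      by (auto simp: agree_outside_def restr_def)
    then show ?thesis
      using True supported_inD[OF P s] supported_inD[OF Q restr_in_configs_superset restr_in_configs_superset, OF s]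
      by (simp add: restr_restr Int_commute)
  next
    case False
    then have "\<not> agree_outside S \<sigma> \<tau> \<or> \<not> agree_outside T \<sigma> \<tau>"
      by (auto simp: agree_outside_def)
    then show ?thesis
      using False supported_in_zero[OF P s] supported_in_zero[OF Q s] by auto
  qed
qed

lemma supported_in_Lam: "supported_in Lam Lam P"
  unfolding supported_in_def by (auto simp: agree_outside_def configs_def restr_id)

lemma acts_within_iff_supported_in: "acts_within Lam S P \<longleftrightarrow> supported_in Lam S P"
proof
  assume "acts_within Lam S P"
  then obtain U where U: "\<forall>\<sigma>\<in>configs Lam. \<forall>\<tau>\<in>configs Lam. P \<sigma> \<tau> = ext_op Lam S U \<sigma> \<tau>"
    unfolding acts_within_def by blast
  show "supported_in Lam S P"
    unfolding supported_in_def
  proof (intro ballI)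
    fix \<sigma> \<tau> assume s: "\<sigma> \<in> configs Lam" "\<tau> \<in> configs Lam"
    then have "restr S \<sigma> \<in> configs Lam" "restr S \<tau> \<in> configs Lam"
      by (simp_all add: restr_in_configs_superset)
    then have "P (restr S \<sigma>) (restr S \<tau>) = U (restr S \<sigma>) (restr S \<tau>)"
      using U by (simp add: ext_op_def restr_restr agree_outside_def[symmetric])
    then show "P \<sigma> \<tau> = (if agree_outside S \<sigma> \<tau> then P (restr S \<sigma>) (restr S \<tau>) else 0)"
      using U s by (auto simp: ext_op_def agree_outside_def)
  qed
next
  assume "supported_in Lam S P"
  then show "acts_within Lam S P"
    unfolding acts_within_def supported_in_def
    by (intro exI[of _ P]) (auto simp: ext_op_def agree_outside_def)
qed

lemma supported_in_op_supp:
  assumes "finite Lam"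
  shows "supported_in Lam (op_supp Lam P) P"
proof -
  let ?F = "{S. S \<subseteq> Lam \<and> supported_in Lam S P}"
  have "\<Inter>G \<in> ?F" if "finite G" "G \<noteq> {}" "G \<subseteq> ?F" for G
    using that by (induction G rule: finite_ne_induct) (auto intro: supported_in_Int)
  moreover have "finite ?F" "Lam \<in> ?F"
    using assms by (auto intro: finite_subset[of _ "Pow Lam"] simp: supported_in_Lam)
  ultimately have "\<Inter>?F \<in> ?F"
    by blast
  then show ?thesis
    by (simp add: op_supp_def acts_within_iff_supported_in)
qed

lemma op_supp_subset: "supported_in Lam S P \<Longrightarrow> S \<subseteq> Lam \<Longrightarrow> op_supp Lam P \<subseteq> S"
  unfolding op_supp_def by (rule Inter_lower) (simp add: acts_within_iff_supported_in)

lemma supported_in_ext_op: "supported_in Lam S (ext_op Lam S U)"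
  using acts_within_def acts_within_iff_supported_in by blast

lemma supported_in_proj1: "supported_in Lam {i} (proj1 Lam i)"
  unfolding supported_in_def
proof (intro ballI)
  fix \<sigma> \<tau> assume s: "\<sigma> \<in> configs Lam" "\<tau> \<in> configs Lam"
  have "restr {i} \<sigma> \<in> configs Lam" "restr {i} \<sigma> i = \<sigma> i"
    using s by (simp_all add: restr_in_configs_superset) (simp add: restr_def)
  moreover have "agree_outside {i} \<sigma> \<tau> \<Longrightarrow> \<sigma> = \<tau> \<longleftrightarrow> restr {i} \<sigma> = restr {i} \<tau>"
    unfolding agree_outside_def restr_def fun_eq_iff by blast
  moreover have "\<sigma> = \<tau> \<Longrightarrow> agree_outside {i} \<sigma> \<tau>"
    by (simp add: agree_outside_def)
  ultimately show "proj1 Lam i \<sigma> \<tau> = (if agree_outside {i} \<sigma> \<tau> then proj1 Lam i (restr {i} \<sigma>) (restr {i} \<tau>) else 0)"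
    using s by (auto simp: proj1_def)
qed

lemma supported_in_op_id: "supported_in Lam {} (op_id Lam)"
  unfolding supported_in_def by (auto simp: op_id_def agree_outside_def restr_def fun_eq_iff)

lemma op_mult_assoc: "finite Y \<Longrightarrow> op_mult Y (op_mult Y P Q) R = op_mult Y P (op_mult Y Q R)"
  unfolding op_mult_def
  by (auto simp: fun_eq_iff sum_distrib_left sum_distrib_right mult.assoc intro: sum.swap)

lemma op_adj_mult: "op_adj (op_mult Y P Q) = op_mult Y (op_adj Q) (op_adj P)"
  unfolding op_mult_def op_adj_def by (auto simp: fun_eq_iff mult.commute)

lemma op_adj_adj [simp]: "op_adj (op_adj P) = P"
  by (simp add: op_adj_def)

lemma op_adj_op_id [simp]: "op_adj (op_id Y) = op_id Y"
  unfolding op_adj_def op_id_def by (intro ext) auto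

lemma op_adj_ext_op: "op_adj (ext_op Lam S U) = ext_op Lam S (op_adj U)"
  by (auto simp: op_adj_def ext_op_def fun_eq_iff)

lemma op_mult_op_id_left: "finite Y \<Longrightarrow> \<sigma> \<in> configs Y \<Longrightarrow> op_mult Y (op_id Y) P \<sigma> \<tau> = P \<sigma> \<tau>"
  unfolding op_mult_def op_id_def by (simp add: finite_configs if_distrib[of "\<lambda>x. x * _"] cong: if_cong)

lemma op_mult_op_id_right: "finite Y \<Longrightarrow> \<tau> \<in> configs Y \<Longrightarrow> op_mult Y P (op_id Y) \<sigma> \<tau> = P \<sigma> \<tau>"
  unfolding op_mult_def op_id_def by (simp add: finite_configs if_distrib[of "\<lambda>x. _ * x"] cong: if_cong)

lemma ext_op_eq:
  "\<sigma> \<in> configs Lam \<Longrightarrow> \<tau> \<in> configs Lam \<Longrightarrow>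
     ext_op Lam S U \<sigma> \<tau> = (if agree_outside S \<sigma> \<tau> then U (restr S \<sigma>) (restr S \<tau>) else 0)"
  by (simp add: ext_op_def agree_outside_def)

definition op_conj :: "'s set \<Rightarrow> 's qop \<Rightarrow> 's qop \<Rightarrow> 's qop" where
  "op_conj Y W P = op_mult Y (op_mult Y W P) (op_adj W)"

lemma op_conj_mult: "finite Y \<Longrightarrow> op_conj Y (op_mult Y U V) P = op_conj Y U (op_conj Y V P)"
  unfolding op_conj_def op_adj_mult by (simp add: op_mult_assoc)

lemma op_conj_op_id:
  "finite Y \<Longrightarrow> \<sigma> \<in> configs Y \<Longrightarrow> \<tau> \<in> configs Y \<Longrightarrow> op_conj Y (op_id Y) P \<sigma> \<tau> = P \<sigma> \<tau>"
  by (simp add: op_conj_def op_mult_op_id_left op_mult_op_id_right)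

lemma supported_in_op_conj_op_id:
  "finite Lam \<Longrightarrow> supported_in Lam T P \<Longrightarrow> supported_in Lam T (op_conj Lam (op_id Lam) P)"
  by (erule supported_in_cong) (simp add: op_conj_op_id)

lemma unitary_onD:
  assumes "unitary_on Y U" "\<sigma> \<in> configs Y" "\<tau> \<in> configs Y"
  shows "(\<Sum>\<mu>\<in>configs Y. U \<sigma> \<mu> * cnj (U \<tau> \<mu>)) = op_id Y \<sigma> \<tau>"
    and "(\<Sum>\<mu>\<in>configs Y. cnj (U \<mu> \<sigma>) * U \<mu> \<tau>) = op_id Y \<sigma> \<tau>"
  using assms by (simp_all add: unitary_on_def op_mult_def op_adj_def)

lemma unitary_on_op_adj: "unitary_on Y U \<Longrightarrow> unitary_on Y (op_adj U)"
  unfolding unitary_on_def by simp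

lemma unitary_on_op_id: "finite Y \<Longrightarrow> unitary_on Y (op_id Y)"
  by (simp add: unitary_on_def op_mult_op_id_left)

lemma op_mult_adj_op_mult:
  assumes "finite Y" and V: "\<And>\<mu> \<nu>. \<mu> \<in> configs Y \<Longrightarrow> \<nu> \<in> configs Y \<Longrightarrow> op_mult Y V (op_adj V) \<mu> \<nu> = op_id Y \<mu> \<nu>"
    and "\<tau> \<in> configs Y"
  shows "op_mult Y (op_mult Y U V) (op_adj (op_mult Y U V)) \<sigma> \<tau> = op_mult Y U (op_adj U) \<sigma> \<tau>"
proof -
  have assoc: "op_mult Y (op_mult Y U V) (op_adj (op_mult Y U V))
      = op_mult Y U (op_mult Y (op_mult Y V (op_adj V)) (op_adj U))"
    unfolding op_adj_mult using assms(1) by (simp add: op_mult_assoc)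
  have "op_mult Y (op_mult Y V (op_adj V)) (op_adj U) \<mu> \<tau> = op_adj U \<mu> \<tau>"
    if "\<mu> \<in> configs Y" for \<mu>
  proof -
    have "op_mult Y (op_mult Y V (op_adj V)) (op_adj U) \<mu> \<tau> = op_mult Y (op_id Y) (op_adj U) \<mu> \<tau>"
      unfolding op_mult_def[of Y "op_mult Y V (op_adj V)"] op_mult_def[of Y "op_id Y"]
      using V[OF that] by simp
    then show ?thesis
      using op_mult_op_id_left[OF assms(1) that] by simp
  qed
  then have "op_mult Y U (op_mult Y (op_mult Y V (op_adj V)) (op_adj U)) \<sigma> \<tau> = op_mult Y U (op_adj U) \<sigma> \<tau>"
    unfolding op_mult_def[of Y U] by simp
  then show ?thesis
    unfolding assoc .
qed

lemma unitary_on_op_mult: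
  assumes "finite Y" "unitary_on Y U" "unitary_on Y V"
  shows "unitary_on Y (op_mult Y U V)"
  unfolding unitary_on_def
proof (intro ballI conjI)
  fix \<sigma> \<tau> assume s: "\<sigma> \<in> configs Y" "\<tau> \<in> configs Y"
  show "op_mult Y (op_mult Y U V) (op_adj (op_mult Y U V)) \<sigma> \<tau> = op_id Y \<sigma> \<tau>"
    using op_mult_adj_op_mult[OF assms(1) _ s(2)] assms s by (simp add: unitary_on_def)
  have "op_mult Y (op_mult Y (op_adj V) (op_adj U)) (op_adj (op_mult Y (op_adj V) (op_adj U))) \<sigma> \<tau>
      = op_id Y \<sigma> \<tau>"
    using op_mult_adj_op_mult[OF assms(1) _ s(2)] assms s by (simp add: unitary_on_def)
  then show "op_mult Y (op_adj (op_mult Y U V)) (op_mult Y U V) \<sigma> \<tau> = op_id Y \<sigma> \<tau>"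
    by (simp add: op_adj_mult)
qed

subsection \<open>Conjugation by gates, layers and circuits\<close>

lemma op_conj_ext_op_eq:
  assumes "finite Lam" "S \<subseteq> Lam" "\<sigma> \<in> configs Lam" "\<tau> \<in> configs Lam"
  shows "op_conj Lam (ext_op Lam S U) P \<sigma> \<tau> = (\<Sum>\<mu>\<in>configs S. \<Sum>\<nu>\<in>configs S.
    U (restr S \<sigma>) \<mu> * P (merge S \<mu> \<sigma>) (merge S \<nu> \<tau>) * cnj (U (restr S \<tau>) \<nu>))"
proof -
  let ?G = "ext_op Lam S U"
  have left: "op_mult Lam ?G P \<sigma> \<beta> = (\<Sum>\<mu>\<in>configs S. U (restr S \<sigma>) \<mu> * P (merge S \<mu> \<sigma>) \<beta>)" for \<beta>
  proof -
    have "op_mult Lam ?G P \<sigma> \<beta>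
        = (\<Sum>\<alpha>\<in>configs Lam. if agree_outside S \<alpha> \<sigma> then U (restr S \<sigma>) (restr S \<alpha>) * P \<alpha> \<beta> else 0)"
      unfolding op_mult_def by (intro sum.cong refl) (simp add: ext_op_eq assms(3) agree_outside_commute)
    then show ?thesis
      using sum_configs_agree_outside[OF assms(1,2,3), of "\<lambda>\<alpha>. U (restr S \<sigma>) (restr S \<alpha>) * P \<alpha> \<beta>"]
      by (simp add: restr_merge cong: sum.cong)
  qed
  have "op_conj Lam ?G P \<sigma> \<tau>
      = (\<Sum>\<beta>\<in>configs Lam. if agree_outside S \<beta> \<tau> then op_mult Lam ?G P \<sigma> \<beta> * cnj (U (restr S \<tau>) (restr S \<beta>)) else 0)"
    unfolding op_conj_def op_mult_def[of Lam "op_mult Lam ?G P"] op_adj_def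
    by (intro sum.cong refl) (simp add: ext_op_eq assms(4) agree_outside_commute)
  also have "\<dots> = (\<Sum>\<nu>\<in>configs S. op_mult Lam ?G P \<sigma> (merge S \<nu> \<tau>) * cnj (U (restr S \<tau>) \<nu>))"
    using sum_configs_agree_outside[OF assms(1,2,4),
        of "\<lambda>\<beta>. op_mult Lam ?G P \<sigma> \<beta> * cnj (U (restr S \<tau>) (restr S \<beta>))"]
    by (simp add: restr_merge cong: sum.cong)
  also have "\<dots> = (\<Sum>\<nu>\<in>configs S. \<Sum>\<mu>\<in>configs S.
      U (restr S \<sigma>) \<mu> * P (merge S \<mu> \<sigma>) (merge S \<nu> \<tau>) * cnj (U (restr S \<tau>) \<nu>))"
    by (simp add: left sum_distrib_right)
  finally show ?thesis
    by (subst sum.swap)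
qed

lemma supported_in_op_conj_ext_op:
  assumes "finite Lam" "S \<subseteq> Lam" and P: "supported_in Lam T P"
  shows "supported_in Lam (T \<union> S) (op_conj Lam (ext_op Lam S U) P)"
  unfolding supported_in_def
proof (intro ballI)
  fix \<sigma> \<tau> assume s: "\<sigma> \<in> configs Lam" "\<tau> \<in> configs Lam"
  let ?s = "restr (T \<union> S) \<sigma>" and ?t = "restr (T \<union> S) \<tau>"
  have r: "?s \<in> configs Lam" "?t \<in> configs Lam"
    using s restr_in_configs_superset by auto
  have m: "merge S \<mu> \<alpha> \<in> configs Lam" if "\<mu> \<in> configs S" "\<alpha> \<in> configs Lam" for \<mu> \<alpha>
    using that assms(2) merge_in_configs_superset by blast
  show "op_conj Lam (ext_op Lam S U) P \<sigma> \<tau>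
      = (if agree_outside (T \<union> S) \<sigma> \<tau> then op_conj Lam (ext_op Lam S U) P ?s ?t else 0)"
  proof (cases "agree_outside (T \<union> S) \<sigma> \<tau>")
    case True
    have "P (merge S \<mu> \<sigma>) (merge S \<nu> \<tau>) = P (merge S \<mu> ?s) (merge S \<nu> ?t)"
      if "\<mu> \<in> configs S" "\<nu> \<in> configs S" for \<mu> \<nu>
      using True by (intro supported_in_eqI[OF P] m that s r)
        (auto simp: agree_outside_def merge_def restr_def)
    moreover have "restr S ?s = restr S \<sigma>" "restr S ?t = restr S \<tau>"
      by (auto simp: restr_def)
    ultimately show ?thesis
      using True by (simp add: op_conj_ext_op_eq[OF assms(1,2) s] op_conj_ext_op_eq[OF assms(1,2) r] cong: sum.cong)
  next
    case False
    then have "\<not> agree_outside T (merge S \<mu> \<sigma>) (merge S \<nu> \<tau>)" for \<mu> \<nu>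
      by (auto simp: agree_outside_def merge_def)
    then show ?thesis
      using False supported_in_zero[OF P m m] s
      by (simp add: op_conj_ext_op_eq[OF assms(1,2) s] cong: sum.cong)
  qed
qed

text \<open>As P acts trivially on S, only the terms diagonal in S survive, and there the gate cancels
  by U U* = I.\<close>
lemma op_conj_ext_op_disjoint_eq:
  assumes "finite Lam" "S \<subseteq> Lam" and P: "supported_in Lam T P" and "S \<inter> T = {}" "unitary_on S U"
    and s: "\<sigma> \<in> configs Lam" "\<tau> \<in> configs Lam"
  shows "op_conj Lam (ext_op Lam S U) P \<sigma> \<tau> = (if agree_outside T \<sigma> \<tau> then P (restr T \<sigma>) (restr T \<tau>) else 0)"
proof -
  let ?w = "if agree_outside (T \<union> S) \<sigma> \<tau> then P (restr T \<sigma>) (restr T \<tau>) else 0"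
  have m: "merge S \<mu> \<alpha> \<in> configs Lam" if "\<mu> \<in> configs S" "\<alpha> \<in> configs Lam" for \<mu> \<alpha>
    using that assms(2) merge_in_configs_superset by blast
  have off_diag: "P (merge S \<mu> \<sigma>) (merge S \<nu> \<tau>) = 0"
    if "\<mu> \<in> configs S" "\<nu> \<in> configs S" "\<nu> \<noteq> \<mu>" for \<mu> \<nu>
  proof (rule supported_in_zero[OF P m m])
    obtain k where "\<mu> k \<noteq> \<nu> k" using \<open>\<nu> \<noteq> \<mu>\<close> by auto
    moreover have "k \<in> S" using calculation that(1,2) by (auto simp: configs_iff)
    ultimately show "\<not> agree_outside T (merge S \<mu> \<sigma>) (merge S \<nu> \<tau>)"
      using assms(4) by (auto simp: agree_outside_def merge_def)
  qed (use that s in auto)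
  have diag: "P (merge S \<mu> \<sigma>) (merge S \<mu> \<tau>) = ?w" if "\<mu> \<in> configs S" for \<mu>
  proof -
    have "agree_outside T (merge S \<mu> \<sigma>) (merge S \<mu> \<tau>) \<longleftrightarrow> agree_outside (T \<union> S) \<sigma> \<tau>"
      "restr T (merge S \<mu> \<sigma>) = restr T \<sigma>" "restr T (merge S \<mu> \<tau>) = restr T \<tau>"
      using assms(4) by (auto simp: agree_outside_def restr_def merge_def)
    then show ?thesis
      using supported_inD[OF P m m, OF that s(1) that s(2)] by simp
  qed
  have fin: "finite (configs S)"
    using assms(1,2) finite_subset finite_configs by blast
  have "op_conj Lam (ext_op Lam S U) P \<sigma> \<tau>
      = (\<Sum>\<mu>\<in>configs S. U (restr S \<sigma>) \<mu> * cnj (U (restr S \<tau>) \<mu>)) * ?w"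
    unfolding op_conj_ext_op_eq[OF assms(1,2) s] sum_distrib_right
  proof (intro sum.cong refl)
    fix \<mu> assume "\<mu> \<in> configs S"
    then show "(\<Sum>\<nu>\<in>configs S. U (restr S \<sigma>) \<mu> * P (merge S \<mu> \<sigma>) (merge S \<nu> \<tau>) * cnj (U (restr S \<tau>) \<nu>))
        = U (restr S \<sigma>) \<mu> * cnj (U (restr S \<tau>) \<mu>) * ?w"
      by (subst sum.remove[OF fin], assumption) (simp add: off_diag diag)
  qed
  also have "\<dots> = (if restr S \<sigma> = restr S \<tau> then ?w else 0)"
    using unitary_onD(1)[OF assms(5) restr_in_configs restr_in_configs] by (simp add: op_id_def)
  also have "\<dots> = (if agree_outside T \<sigma> \<tau> then P (restr T \<sigma>) (restr T \<tau>) else 0)"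
    using assms(4) by (auto simp: agree_outside_def restr_def fun_eq_iff)
  finally show ?thesis .
qed

lemma supported_in_op_conj_gate:
  assumes "finite Lam" "S \<subseteq> Lam" "supported_in Lam T P" "unitary_on S U"
  shows "supported_in Lam (if S \<inter> T = {} then T else T \<union> S) (op_conj Lam (ext_op Lam S U) P)"
proof (cases "S \<inter> T = {}")
  case True
  show ?thesis
    unfolding supported_in_def
    using True op_conj_ext_op_disjoint_eq[OF assms(1-3) True assms(4)]
      op_conj_ext_op_disjoint_eq[OF assms(1-3) True assms(4) restr_in_configs_superset restr_in_configs_superset]
    by simp
qed (simp add: supported_in_op_conj_ext_op assms)

lemma unitary_on_ext_op:
  assumes "finite Lam" "S \<subseteq> Lam" "unitary_on S U"
  shows "unitary_on Lam (ext_op Lam S U)"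
proof -
  have right_inverse: "op_mult Lam (ext_op Lam S V) (op_adj (ext_op Lam S V)) \<sigma> \<tau> = op_id Lam \<sigma> \<tau>"
    if "unitary_on S V" "\<sigma> \<in> configs Lam" "\<tau> \<in> configs Lam" for V \<sigma> \<tau>
  proof -
    let ?G = "ext_op Lam S V"
    have "op_mult Lam ?G (op_adj ?G) \<sigma> \<tau> = (\<Sum>\<mu>\<in>configs Lam. op_mult Lam ?G (op_id Lam) \<sigma> \<mu> * op_adj ?G \<mu> \<tau>)"
      unfolding op_mult_def[of Lam ?G "op_adj ?G"] using assms(1) by (simp add: op_mult_op_id_right cong: sum.cong)
    also have "\<dots> = op_conj Lam ?G (op_id Lam) \<sigma> \<tau>"
      unfolding op_conj_def op_mult_def[of Lam "op_mult Lam ?G (op_id Lam)"] ..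
    also have "\<dots> = op_id Lam \<sigma> \<tau>"
      using op_conj_ext_op_disjoint_eq[OF assms(1,2) supported_in_op_id _ that] that(2)
      by (auto simp: op_id_def agree_outside_def restr_def fun_eq_iff)
    finally show ?thesis .
  qed
  show ?thesis
    unfolding unitary_on_def
    using right_inverse[OF assms(3)] right_inverse[OF unitary_on_op_adj[OF assms(3)]] by (simp add: op_adj_ext_op)
qed

lemma valid_gateD:
  assumes "valid_gate Lam g"
  shows "gate_sites g \<subseteq> Lam" "unitary_on (gate_sites g) (snd (snd g))"
  using assms by (auto simp: valid_gate_def gate_sites_def split: prod.splits)

lemma valid_layer_ConsD:
  assumes "valid_layer Lam (g # L)"
  shows "valid_gate Lam g" "valid_layer Lam L" "\<And>g'. g' \<in> set L \<Longrightarrow> gate_sites g \<inter> gate_sites g' = {}"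
proof -
  show "valid_gate Lam g" using assms by (simp add: valid_layer_def)
  show "valid_layer Lam L"
    using assms unfolding valid_layer_def by (metis Suc_less_eq length_Cons list.set_intros(2) nat.inject nth_Cons_Suc)
  fix g' assume "g' \<in> set L"
  then obtain b where "b < length L" "L ! b = g'" by (auto simp: in_set_conv_nth)
  then show "gate_sites g \<inter> gate_sites g' = {}"
    using assms unfolding valid_layer_def by (metis Suc_less_eq length_Cons nat.distinct(1) nth_Cons_0 nth_Cons_Suc zero_less_Suc)
qed

lemma layer_op_Nil: "layer_op Lam [] = op_id Lam"
  by (simp add: layer_op_def)

lemma layer_op_Cons:
  "layer_op Lam (g # L) = op_mult Lam (ext_op Lam (gate_sites g) (snd (snd g))) (layer_op Lam L)"
  by (simp add: layer_op_def)

lemma unitary_on_layer_op: "finite Lam \<Longrightarrow> valid_layer Lam L \<Longrightarrow> unitary_on Lam (layer_op Lam L)"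
  by (induction L) (auto simp: layer_op_Nil layer_op_Cons unitary_on_op_id
      intro!: unitary_on_op_mult unitary_on_ext_op dest: valid_layer_ConsD valid_gateD)

text \<open>Only the gates touching T count: the gates of a layer are disjoint, so no gate can reach
  sites added by another gate of the same layer.\<close>
definition layer_cone :: "layer \<Rightarrow> site set \<Rightarrow> site set" where
  "layer_cone L T = T \<union> \<Union>(gate_sites ` {g \<in> set L. gate_sites g \<inter> T \<noteq> {}})"

lemma supported_in_op_conj_layer:
  assumes "finite Lam"
  shows "valid_layer Lam L \<Longrightarrow> supported_in Lam T P \<Longrightarrow>
    supported_in Lam (layer_cone L T) (op_conj Lam (layer_op Lam L) P)"
proof (induction L arbitrary: T P)
  case Nil
  then show ?case
    by (simp add: layer_op_Nil layer_cone_def supported_in_op_conj_op_id assms)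
next
  case (Cons g L)
  let ?T = "layer_cone L T"
  note g = valid_layer_ConsD[OF Cons.prems(1)]
  have "supported_in Lam (if gate_sites g \<inter> ?T = {} then ?T else ?T \<union> gate_sites g)
      (op_conj Lam (ext_op Lam (gate_sites g) (snd (snd g))) (op_conj Lam (layer_op Lam L) P))"
    using Cons g(2) valid_gateD[OF g(1)] by (intro supported_in_op_conj_gate assms) auto
  moreover have "(if gate_sites g \<inter> ?T = {} then ?T else ?T \<union> gate_sites g) \<subseteq> layer_cone (g # L) T"
    using g(3) by (auto simp: layer_cone_def)
  ultimately show ?case
    by (simp add: layer_op_Cons op_conj_mult assms supported_in_mono)
qed

lemma supported_in_op_conj_adj_layer:
  assumes "finite Lam"
  shows "valid_layer Lam L \<Longrightarrow> supported_in Lam T P \<Longrightarrow>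
    supported_in Lam (layer_cone L T) (op_conj Lam (op_adj (layer_op Lam L)) P)"
proof (induction L arbitrary: T P)
  case Nil
  then show ?case
    by (simp add: layer_op_Nil layer_cone_def supported_in_op_conj_op_id assms)
next
  case (Cons g L)
  let ?T = "if gate_sites g \<inter> T = {} then T else T \<union> gate_sites g"
  note g = valid_layer_ConsD[OF Cons.prems(1)]
  have "supported_in Lam ?T (op_conj Lam (ext_op Lam (gate_sites g) (op_adj (snd (snd g)))) P)"
    using Cons.prems(2) valid_gateD[OF g(1)] by (intro supported_in_op_conj_gate assms unitary_on_op_adj)
  then have "supported_in Lam (layer_cone L ?T)
      (op_conj Lam (op_adj (layer_op Lam L)) (op_conj Lam (op_adj (ext_op Lam (gate_sites g) (snd (snd g)))) P))"
    using Cons.IH[OF g(2)] by (simp add: op_adj_ext_op)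
  moreover have "layer_cone L ?T \<subseteq> layer_cone (g # L) T"
    using g(3) by (auto simp: layer_cone_def)
  ultimately show ?case
    by (simp add: layer_op_Cons op_adj_mult op_conj_mult assms supported_in_mono)
qed

definition lat_nbhd :: "site set \<Rightarrow> nat \<Rightarrow> site set \<Rightarrow> site set" where
  "lat_nbhd Lam k T = {y \<in> Lam. \<exists>t\<in>T. \<exists>j\<le>k. (t, y) \<in> lat_edges Lam ^^ j}"

lemma lat_nbhd_subset: "lat_nbhd Lam k T \<subseteq> Lam"
  by (auto simp: lat_nbhd_def)

lemma subset_lat_nbhd: "T \<subseteq> Lam \<Longrightarrow> T \<subseteq> lat_nbhd Lam k T"
  unfolding lat_nbhd_def by (auto intro!: exI[of _ 0])

lemma lat_nbhd_lat_nbhd: "lat_nbhd Lam k (lat_nbhd Lam m T) \<subseteq> lat_nbhd Lam (m + k) T"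
proof
  fix y assume "y \<in> lat_nbhd Lam k (lat_nbhd Lam m T)"
  then obtain x t i j where "y \<in> Lam" "t \<in> T" "i \<le> m" "(t, x) \<in> lat_edges Lam ^^ i"
    "j \<le> k" "(x, y) \<in> lat_edges Lam ^^ j"
    unfolding lat_nbhd_def by blast
  then show "y \<in> lat_nbhd Lam (m + k) T"
    unfolding lat_nbhd_def by (auto intro!: bexI[of _ t] exI[of _ "i + j"] simp: relpow_add)
qed

lemma lat_dist_le_relpow: "(x, y) \<in> lat_edges Lam ^^ j \<Longrightarrow> lat_dist Lam x y \<le> enat j"
  unfolding lat_dist_def by (auto intro: Least_le)

lemma lat_adjacent_commute: "lat_adjacent x y \<longleftrightarrow> lat_adjacent y x"
  unfolding lat_adjacent_def by (metis (no_types, lifting) abs_minus_commute sum.cong)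

lemma layer_cone_subset_lat_nbhd:
  assumes "valid_layer Lam L" "T \<subseteq> Lam"
  shows "layer_cone L T \<subseteq> lat_nbhd Lam 1 T"
proof
  fix x assume "x \<in> layer_cone L T"
  then consider "x \<in> T" | g where "g \<in> set L" "gate_sites g \<inter> T \<noteq> {}" "x \<in> gate_sites g"
    unfolding layer_cone_def by blast
  then show "x \<in> lat_nbhd Lam 1 T"
  proof cases
    case 2
    obtain i j U where g: "g = (i, j, U)" by (cases g)
    have ij: "i \<in> Lam" "j \<in> Lam" "lat_adjacent i j" "lat_adjacent j i"
      using 2 assms(1) g lat_adjacent_commute by (auto simp: valid_layer_def valid_gate_def)
    obtain t where t: "t \<in> T" "t \<in> {i, j}"
      using 2 g by (auto simp: gate_sites_def)
    have "x \<in> {i, j}"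
      using 2 g by (simp add: gate_sites_def)
    then have "x = t \<or> (t, x) \<in> lat_edges Lam ^^ 1"
      using t ij by (auto simp: lat_edges_def)
    then show ?thesis
      using t ij \<open>x \<in> {i, j}\<close> subset_lat_nbhd[OF assms(2)] unfolding lat_nbhd_def by blast
  qed (use subset_lat_nbhd[OF assms(2)] in blast)
qed

lemma circuit_op_Nil: "circuit_op Lam [] = op_id Lam"
  by (simp add: circuit_op_def)

lemma circuit_op_snoc: "circuit_op Lam (Ls @ [L]) = op_mult Lam (layer_op Lam L) (circuit_op Lam Ls)"
  by (simp add: circuit_op_def)

lemma unitary_on_circuit_op:
  "finite Lam \<Longrightarrow> \<forall>L\<in>set Ls. valid_layer Lam L \<Longrightarrow> unitary_on Lam (circuit_op Lam Ls)"
  by (induction Ls rule: rev_induct)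
    (simp_all add: circuit_op_Nil circuit_op_snoc unitary_on_op_id unitary_on_op_mult unitary_on_layer_op)

lemma supported_in_op_conj_circuit:
  assumes "finite Lam"
  shows "\<forall>L\<in>set Ls. valid_layer Lam L \<Longrightarrow> supported_in Lam T P \<Longrightarrow> T \<subseteq> Lam \<Longrightarrow>
    supported_in Lam (lat_nbhd Lam (length Ls) T) (op_conj Lam (circuit_op Lam Ls) P)"
proof (induction Ls rule: rev_induct)
  case Nil
  then show ?case
    using subset_lat_nbhd[of T Lam 0]
    by (auto simp: circuit_op_Nil assms intro: supported_in_mono supported_in_op_conj_op_id)
next
  case (snoc L Ls)
  let ?T = "lat_nbhd Lam (length Ls) T"
  have "supported_in Lam (layer_cone L ?T) (op_conj Lam (layer_op Lam L) (op_conj Lam (circuit_op Lam Ls) P))"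
    using snoc by (intro supported_in_op_conj_layer assms) auto
  moreover have "layer_cone L ?T \<subseteq> lat_nbhd Lam (length (Ls @ [L])) T"
    using layer_cone_subset_lat_nbhd[OF _ lat_nbhd_subset, of Lam L "length Ls" T]
      lat_nbhd_lat_nbhd[of Lam 1 "length Ls" T] snoc.prems(1) by auto
  ultimately show ?case
    by (simp add: circuit_op_snoc op_conj_mult assms supported_in_mono)
qed

lemma supported_in_op_conj_adj_circuit:
  assumes "finite Lam"
  shows "\<forall>L\<in>set Ls. valid_layer Lam L \<Longrightarrow> supported_in Lam T P \<Longrightarrow> T \<subseteq> Lam \<Longrightarrow>
    supported_in Lam (lat_nbhd Lam (length Ls) T) (op_conj Lam (op_adj (circuit_op Lam Ls)) P)"
proof (induction Ls arbitrary: T P rule: rev_induct)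
  case Nil
  then show ?case
    using subset_lat_nbhd[of T Lam 0]
    by (auto simp: circuit_op_Nil assms intro: supported_in_mono supported_in_op_conj_op_id)
next
  case (snoc L Ls)
  have "supported_in Lam (layer_cone L T) (op_conj Lam (op_adj (layer_op Lam L)) P)"
    using snoc.prems by (intro supported_in_op_conj_adj_layer assms) auto
  then have "supported_in Lam (lat_nbhd Lam 1 T) (op_conj Lam (op_adj (layer_op Lam L)) P)"
    by (rule supported_in_mono) (use layer_cone_subset_lat_nbhd snoc.prems in auto)
  then have "supported_in Lam (lat_nbhd Lam (length Ls) (lat_nbhd Lam 1 T))
      (op_conj Lam (op_adj (circuit_op Lam Ls)) (op_conj Lam (op_adj (layer_op Lam L)) P))"
    using snoc.IH snoc.prems(1) lat_nbhd_subset by simp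
  moreover have "lat_nbhd Lam (length Ls) (lat_nbhd Lam 1 T) \<subseteq> lat_nbhd Lam (length (Ls @ [L])) T"
    using lat_nbhd_lat_nbhd[of Lam "length Ls" 1 T] by simp
  ultimately show ?case
    by (simp add: circuit_op_snoc op_adj_mult op_conj_mult assms supported_in_mono)
qed

lemma op_supp_parent_term:
  assumes "finite Lam" "\<forall>L\<in>set Ls. valid_layer Lam L" "i \<in> Lam"
  shows "op_supp Lam (parent_term Lam Ls i) \<subseteq> lat_nbhd Lam (length Ls) {i}"
proof -
  have "supported_in Lam (lat_nbhd Lam (length Ls) {i}) (op_conj Lam (circuit_op Lam Ls) (proj1 Lam i))"
    using assms by (intro supported_in_op_conj_circuit supported_in_proj1) auto
  then show ?thesis
    unfolding parent_term_def op_conj_def[symmetric] by (rule op_supp_subset[OF _ lat_nbhd_subset])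
qed

subsection \<open>Functions of simultaneously diagonalised operators\<close>

definition diag_op :: "'s set \<Rightarrow> (('s \<Rightarrow> bool) \<Rightarrow> complex) \<Rightarrow> 's qop" where
  "diag_op Y d = (\<lambda>\<sigma> \<tau>. if \<sigma> = \<tau> \<and> \<sigma> \<in> configs Y then d \<sigma> else 0)"

lemma proj1_eq_diag_op: "proj1 Lam i = diag_op Lam (\<lambda>\<mu>. if \<mu> i then 1 else 0)"
  by (auto simp: proj1_def diag_op_def fun_eq_iff)

lemma op_conj_diag_op:
  "finite Y \<Longrightarrow> op_conj Y W (diag_op Y d) \<sigma> \<tau> = (\<Sum>\<mu>\<in>configs Y. W \<sigma> \<mu> * d \<mu> * cnj (W \<tau> \<mu>))"
  unfolding op_conj_def op_mult_def op_adj_def diag_op_def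
  by (simp add: finite_configs if_distrib[of "\<lambda>x. _ * x"] cong: if_cong)

lemma op_mult_op_conj_diag_op:
  assumes "finite Y" "unitary_on Y W"
  shows "op_mult Y (op_conj Y W (diag_op Y d)) (op_conj Y W (diag_op Y e)) \<sigma> \<tau>
    = op_conj Y W (diag_op Y (\<lambda>\<mu>. d \<mu> * e \<mu>)) \<sigma> \<tau>"
proof -
  let ?a = "\<lambda>\<mu>. W \<sigma> \<mu> * d \<mu>" and ?b = "\<lambda>\<mu>. e \<mu> * cnj (W \<tau> \<mu>)"
  have "op_mult Y (op_conj Y W (diag_op Y d)) (op_conj Y W (diag_op Y e)) \<sigma> \<tau>
      = (\<Sum>\<nu>\<in>configs Y. (\<Sum>\<mu>\<in>configs Y. ?a \<mu> * cnj (W \<nu> \<mu>)) * (\<Sum>\<mu>'\<in>configs Y. W \<nu> \<mu>' * ?b \<mu>'))"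
    by (simp add: op_mult_def op_conj_diag_op assms(1) mult.assoc)
  also have "\<dots> = (\<Sum>\<nu>\<in>configs Y. \<Sum>\<mu>\<in>configs Y. \<Sum>\<mu>'\<in>configs Y. ?a \<mu> * (cnj (W \<nu> \<mu>) * W \<nu> \<mu>') * ?b \<mu>')"
    by (simp add: sum_product mult.assoc)
  also have "\<dots> = (\<Sum>\<mu>\<in>configs Y. \<Sum>\<mu>'\<in>configs Y. \<Sum>\<nu>\<in>configs Y. ?a \<mu> * (cnj (W \<nu> \<mu>) * W \<nu> \<mu>') * ?b \<mu>')"
    by (subst sum.swap) (intro sum.cong refl sum.swap)
  also have "\<dots> = (\<Sum>\<mu>\<in>configs Y. \<Sum>\<mu>'\<in>configs Y. ?a \<mu> * (\<Sum>\<nu>\<in>configs Y. cnj (W \<nu> \<mu>) * W \<nu> \<mu>') * ?b \<mu>')"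
    by (simp only: sum_distrib_left sum_distrib_right)
  also have "\<dots> = (\<Sum>\<mu>\<in>configs Y. \<Sum>\<mu>'\<in>configs Y. ?a \<mu> * op_id Y \<mu> \<mu>' * ?b \<mu>')"
    using unitary_onD(2)[OF assms(2)] by (simp cong: sum.cong)
  also have "\<dots> = (\<Sum>\<mu>\<in>configs Y. ?a \<mu> * ?b \<mu>)"
    by (simp add: op_id_def finite_configs assms(1) if_distrib[of "\<lambda>x. _ * x"] if_distrib[of "\<lambda>x. x * _"] cong: if_cong)
  also have "\<dots> = op_conj Y W (diag_op Y (\<lambda>\<mu>. d \<mu> * e \<mu>)) \<sigma> \<tau>"
    by (simp add: op_conj_diag_op assms(1) mult_ac)
  finally show ?thesis .
qed

lemma op_pow_op_conj_diag_op:
  assumes "finite Y" "unitary_on Y W"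
    and P: "\<And>\<sigma> \<tau>. \<sigma> \<in> configs Y \<Longrightarrow> \<tau> \<in> configs Y \<Longrightarrow> P \<sigma> \<tau> = op_conj Y W (diag_op Y d) \<sigma> \<tau>"
    and "\<sigma> \<in> configs Y"
  shows "\<tau> \<in> configs Y \<Longrightarrow> op_pow Y P k \<sigma> \<tau> = op_conj Y W (diag_op Y (\<lambda>\<mu>. d \<mu> ^ k)) \<sigma> \<tau>"
proof (induction k arbitrary: \<tau>)
  case 0
  then show ?case
    using unitary_onD(1)[OF assms(2,4)] by (simp add: op_conj_diag_op assms(1))
next
  case (Suc k)
  have "op_pow Y P (Suc k) \<sigma> \<tau>
      = op_mult Y (op_conj Y W (diag_op Y (\<lambda>\<mu>. d \<mu> ^ k))) (op_conj Y W (diag_op Y d)) \<sigma> \<tau>"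
    by (simp add: op_mult_def Suc P cong: sum.cong)
  then show ?case
    by (simp add: op_mult_op_conj_diag_op assms(1,2) mult.commute)
qed

lemma op_exp_op_conj_diag_op:
  assumes "finite Y" "unitary_on Y W"
    and "\<And>\<sigma> \<tau>. \<sigma> \<in> configs Y \<Longrightarrow> \<tau> \<in> configs Y \<Longrightarrow> P \<sigma> \<tau> = op_conj Y W (diag_op Y d) \<sigma> \<tau>"
    and "\<sigma> \<in> configs Y" "\<tau> \<in> configs Y"
  shows "op_exp Y P \<sigma> \<tau> = op_conj Y W (diag_op Y (\<lambda>\<mu>. exp (d \<mu>))) \<sigma> \<tau>"
proof -
  have exp_series: "(\<lambda>k. x ^ k / of_nat (fact k)) sums exp x" for x :: complex
    using exp_converges[of x] by (simp add: scaleR_conv_of_real field_simps)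
  have "(\<lambda>k. op_pow Y P k \<sigma> \<tau> / of_nat (fact k))
      = (\<lambda>k. \<Sum>\<mu>\<in>configs Y. W \<sigma> \<mu> * (d \<mu> ^ k / of_nat (fact k)) * cnj (W \<tau> \<mu>))"
    by (simp add: op_pow_op_conj_diag_op[OF assms] op_conj_diag_op assms(1) sum_divide_distrib)
  moreover have "\<dots> sums op_conj Y W (diag_op Y (\<lambda>\<mu>. exp (d \<mu>))) \<sigma> \<tau>"
    unfolding op_conj_diag_op[OF assms(1)] by (intro sums_sum sums_mult sums_mult2 exp_series)
  ultimately show ?thesis
    unfolding op_exp_def by (simp add: sums_iff)
qed

lemma op_trace_op_conj_diag_op:
  assumes "finite Y" "unitary_on Y W"
  shows "op_trace Y (op_conj Y W (diag_op Y d)) = (\<Sum>\<mu>\<in>configs Y. d \<mu>)"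
proof -
  have "op_trace Y (op_conj Y W (diag_op Y d)) = (\<Sum>\<sigma>\<in>configs Y. \<Sum>\<mu>\<in>configs Y. W \<sigma> \<mu> * d \<mu> * cnj (W \<sigma> \<mu>))"
    by (simp add: op_trace_def op_conj_diag_op assms(1))
  also have "\<dots> = (\<Sum>\<mu>\<in>configs Y. d \<mu> * (\<Sum>\<sigma>\<in>configs Y. cnj (W \<sigma> \<mu>) * W \<sigma> \<mu>))"
    by (subst sum.swap) (simp add: sum_distrib_left mult_ac)
  also have "\<dots> = (\<Sum>\<mu>\<in>configs Y. d \<mu>)"
    using unitary_onD(2)[OF assms(2)] by (simp add: op_id_def cong: sum.cong)
  finally show ?thesis .
qed

lemma op_trace_mult_op_conj_diag_op:
  assumes "finite Y"
  shows "op_trace Y (op_mult Y K (op_conj Y W (diag_op Y d)))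
    = (\<Sum>\<mu>\<in>configs Y. d \<mu> * op_conj Y (op_adj W) K \<mu> \<mu>)"
proof -
  have "op_trace Y (op_mult Y K (op_conj Y W (diag_op Y d)))
      = (\<Sum>\<gamma>\<in>configs Y. \<Sum>\<alpha>\<in>configs Y. \<Sum>\<mu>\<in>configs Y. d \<mu> * (cnj (W \<gamma> \<mu>) * K \<gamma> \<alpha> * W \<alpha> \<mu>))"
    by (simp add: op_trace_def op_mult_def op_conj_diag_op assms sum_distrib_left mult_ac)
  also have "\<dots> = (\<Sum>\<alpha>\<in>configs Y. \<Sum>\<mu>\<in>configs Y. \<Sum>\<gamma>\<in>configs Y. d \<mu> * (cnj (W \<gamma> \<mu>) * K \<gamma> \<alpha> * W \<alpha> \<mu>))"
    by (subst sum.swap) (intro sum.cong refl sum.swap)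
  also have "\<dots> = (\<Sum>\<mu>\<in>configs Y. \<Sum>\<alpha>\<in>configs Y. \<Sum>\<gamma>\<in>configs Y. d \<mu> * (cnj (W \<gamma> \<mu>) * K \<gamma> \<alpha> * W \<alpha> \<mu>))"
    by (rule sum.swap)
  also have "\<dots> = (\<Sum>\<mu>\<in>configs Y. d \<mu> * op_conj Y (op_adj W) K \<mu> \<mu>)"
    by (simp add: op_conj_def op_mult_def op_adj_def sum_distrib_left sum_distrib_right)
  finally show ?thesis .
qed

lemma supported_in_sum:
  assumes "\<And>i. i \<in> I \<Longrightarrow> supported_in Lam S (P i)"
  shows "supported_in Lam S (\<lambda>\<sigma> \<tau>. \<Sum>i\<in>I. P i \<sigma> \<tau>)"
  unfolding supported_in_def
proof (intro ballI)
  fix \<sigma> \<tau> assume "\<sigma> \<in> configs Lam" "\<tau> \<in> configs Lam"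
  then have "P i \<sigma> \<tau> = (if agree_outside S \<sigma> \<tau> then P i (restr S \<sigma>) (restr S \<tau>) else 0)" if "i \<in> I" for i
    using supported_inD[OF assms[OF that]] by blast
  then show "(\<Sum>i\<in>I. P i \<sigma> \<tau>) = (if agree_outside S \<sigma> \<tau> then \<Sum>i\<in>I. P i (restr S \<sigma>) (restr S \<tau>) else 0)"
    by (simp cong: sum.cong)
qed

lemma supported_in_scale:
  assumes "supported_in Lam S P"
  shows "supported_in Lam S (\<lambda>\<sigma> \<tau>. c * P \<sigma> \<tau>)"
  unfolding supported_in_def
proof (intro ballI)
  fix \<sigma> \<tau> assume "\<sigma> \<in> configs Lam" "\<tau> \<in> configs Lam"
  then show "c * P \<sigma> \<tau> = (if agree_outside S \<sigma> \<tau> then c * P (restr S \<sigma>) (restr S \<tau>) else 0)"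
    using supported_inD[OF assms] by simp
qed

lemma op_mult_supported_in_eq:
  assumes "finite Lam" "Y \<subseteq> Lam" "supported_in Lam Y P" "\<sigma> \<in> configs Lam"
  shows "op_mult Lam P Q \<sigma> \<tau> = (\<Sum>\<nu>\<in>configs Y. P \<sigma> (merge Y \<nu> \<sigma>) * Q (merge Y \<nu> \<sigma>) \<tau>)"
proof -
  have "op_mult Lam P Q \<sigma> \<tau> = (\<Sum>\<mu>\<in>configs Lam. if agree_outside Y \<mu> \<sigma> then P \<sigma> \<mu> * Q \<mu> \<tau> else 0)"
    unfolding op_mult_def
    using supported_in_zero[OF assms(3,4)] by (intro sum.cong refl) (auto simp: agree_outside_commute)
  then show ?thesis
    by (simp add: sum_configs_agree_outside[OF assms(1,2,4)])
qed

lemma supported_in_op_mult: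
  assumes "finite Lam" "Y \<subseteq> Lam" and P: "supported_in Lam Y P" and Q: "supported_in Lam Y Q"
  shows "supported_in Lam Y (op_mult Lam P Q)"
  unfolding supported_in_def
proof (intro ballI)
  fix \<sigma> \<tau> assume s: "\<sigma> \<in> configs Lam" "\<tau> \<in> configs Lam"
  let ?s = "restr Y \<sigma>" and ?t = "restr Y \<tau>"
  have r: "?s \<in> configs Lam" "?t \<in> configs Lam"
    using s restr_in_configs_superset by auto
  have m: "merge Y \<nu> \<alpha> \<in> configs Lam" if "\<nu> \<in> configs Y" "\<alpha> \<in> configs Lam" for \<nu> \<alpha>
    using that assms(2) merge_in_configs_superset by blast
  show "op_mult Lam P Q \<sigma> \<tau> = (if agree_outside Y \<sigma> \<tau> then op_mult Lam P Q ?s ?t else 0)"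
  proof (cases "agree_outside Y \<sigma> \<tau>")
    case True
    have "P \<sigma> (merge Y \<nu> \<sigma>) = P ?s (merge Y \<nu> ?s)" if "\<nu> \<in> configs Y" for \<nu>
      using True by (intro supported_in_eqI[OF P] m that s r) (auto simp: agree_outside_def merge_def restr_def)
    moreover have "Q (merge Y \<nu> \<sigma>) \<tau> = Q (merge Y \<nu> ?s) ?t" if "\<nu> \<in> configs Y" for \<nu>
      using True by (intro supported_in_eqI[OF Q] m that s r) (auto simp: agree_outside_def merge_def restr_def)
    ultimately show ?thesis
      using True by (simp add: op_mult_supported_in_eq[OF assms(1-3)] s r cong: sum.cong)
  next
    case False
    then have "Q (merge Y \<nu> \<sigma>) \<tau> = 0" if "\<nu> \<in> configs Y" for \<nu>
      using that s m by (intro supported_in_zero[OF Q]) (auto simp: agree_outside_def merge_def)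
    then show ?thesis
      using False by (simp add: op_mult_supported_in_eq[OF assms(1-3)] s cong: sum.cong)
  qed
qed

lemma supported_in_op_pow:
  "finite Lam \<Longrightarrow> Y \<subseteq> Lam \<Longrightarrow> supported_in Lam Y P \<Longrightarrow> supported_in Lam Y (op_pow Lam P k)"
proof (induction k)
  case 0
  then show ?case
    using supported_in_op_id by (auto intro: supported_in_mono)
qed (simp add: supported_in_op_mult)

lemma supported_in_op_exp:
  assumes "finite Lam" "Y \<subseteq> Lam" "supported_in Lam Y P"
  shows "supported_in Lam Y (op_exp Lam P)"
  unfolding supported_in_def
proof (intro ballI)
  fix \<sigma> \<tau> assume "\<sigma> \<in> configs Lam" "\<tau> \<in> configs Lam"
  then have "op_pow Lam P k \<sigma> \<tau> = (if agree_outside Y \<sigma> \<tau> then op_pow Lam P k (restr Y \<sigma>) (restr Y \<tau>) else 0)" for k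
    using supported_inD[OF supported_in_op_pow[OF assms]] by blast
  then show "op_exp Lam P \<sigma> \<tau> = (if agree_outside Y \<sigma> \<tau> then op_exp Lam P (restr Y \<sigma>) (restr Y \<tau>) else 0)"
    unfolding op_exp_def by simp
qed

lemma op_pow_supported_in_restrict:
  assumes "finite Lam" "Y \<subseteq> Lam" "supported_in Lam Y P" "\<alpha> \<in> configs Y"
  shows "\<gamma> \<in> configs Y \<Longrightarrow> op_pow Y P k \<alpha> \<gamma> = op_pow Lam P k \<alpha> \<gamma>"
proof (induction k arbitrary: \<gamma>)
  case 0
  then show ?case
    using configs_mono[OF assms(2)] assms(4) by (auto simp: op_id_def)
next
  case (Suc k)
  have "\<gamma> \<in> configs Lam"
    using Suc.prems configs_mono[OF assms(2)] by blast
  have "P \<mu> \<gamma> = 0" if \<mu>: "\<mu> \<in> configs Lam - configs Y" for \<mu>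
  proof (rule supported_in_zero[OF assms(3)])
    obtain i where "i \<notin> Y" "\<mu> i"
      using \<mu> by (auto simp: configs_iff)
    then show "\<not> agree_outside Y \<mu> \<gamma>"
      using Suc.prems by (auto simp: configs_iff agree_outside_def)
  qed (use that \<open>\<gamma> \<in> configs Lam\<close> in auto)
  then have "(\<Sum>\<mu>\<in>configs Y. op_pow Lam P k \<alpha> \<mu> * P \<mu> \<gamma>) = (\<Sum>\<mu>\<in>configs Lam. op_pow Lam P k \<alpha> \<mu> * P \<mu> \<gamma>)"
    by (intro sum.mono_neutral_left finite_configs configs_mono assms(1,2)) auto
  then show ?case
    by (simp add: op_mult_def Suc.IH cong: sum.cong)
qed

lemma op_exp_supported_in_restrict:
  "finite Lam \<Longrightarrow> Y \<subseteq> Lam \<Longrightarrow> supported_in Lam Y P \<Longrightarrow> \<alpha> \<in> configs Y \<Longrightarrow> \<gamma> \<in> configs Y \<Longrightarrow>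
    op_exp Y P \<alpha> \<gamma> = op_exp Lam P \<alpha> \<gamma>"
  unfolding op_exp_def by (simp add: op_pow_supported_in_restrict)

subsection \<open>Partial traces\<close>

lemma ptrace_supported_in:
  assumes "finite Lam" "A \<subseteq> X" "X \<subseteq> Lam" and F: "supported_in Lam X F"
    and s: "\<sigma> \<in> configs A" "\<tau> \<in> configs A"
  shows "ptrace (Lam - A) F \<sigma> \<tau> = 2 ^ card (Lam - X) * ptrace (X - A) F \<sigma> \<tau>"
proof -
  have split: "Lam - A = (X - A) \<union> (Lam - X)"
    using assms(2,3) by auto
  have fin: "finite (X - A)" "finite (Lam - X)" and disj: "(X - A) \<inter> (Lam - X) = {}"
    using assms(1,3) finite_subset by auto
  have sL: "\<sigma> \<in> configs Lam" "\<tau> \<in> configs Lam"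
    using s configs_mono[of A Lam] assms(2,3) by auto
  have "F (merge (Lam - A) (merge (X - A) \<mu> \<nu>) \<alpha>) (merge (Lam - A) (merge (X - A) \<mu> \<nu>) \<beta>)
      = F (merge (X - A) \<mu> \<alpha>) (merge (X - A) \<mu> \<beta>)"
    if "\<mu> \<in> configs (X - A)" "\<nu> \<in> configs (Lam - X)" "\<alpha> \<in> configs A" "\<beta> \<in> configs A" for \<mu> \<nu> \<alpha> \<beta>
  proof (rule supported_in_eqI[OF F])
    have "merge (X - A) \<mu> \<nu> \<in> configs (Lam - A)"
      using merge_in_configs[OF that(1,2)] split by simp
    then show "merge (Lam - A) (merge (X - A) \<mu> \<nu>) \<alpha> \<in> configs Lam"
      "merge (Lam - A) (merge (X - A) \<mu> \<nu>) \<beta> \<in> configs Lam"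
      using that(3,4) configs_mono[of A Lam] assms(2,3) by (auto intro!: merge_in_configs_superset)
    show "merge (X - A) \<mu> \<alpha> \<in> configs Lam" "merge (X - A) \<mu> \<beta> \<in> configs Lam"
      using that configs_mono[of A Lam] assms(2,3) by (auto intro!: merge_in_configs_superset)
    show "agree_outside X (merge (Lam - A) (merge (X - A) \<mu> \<nu>) \<alpha>) (merge (Lam - A) (merge (X - A) \<mu> \<nu>) \<beta>)
        \<longleftrightarrow> agree_outside X (merge (X - A) \<mu> \<alpha>) (merge (X - A) \<mu> \<beta>)"
      using that(3,4) assms(2) by (auto simp: agree_outside_def merge_def configs_iff)
    show "restr X (merge (Lam - A) (merge (X - A) \<mu> \<nu>) \<alpha>) = restr X (merge (X - A) \<mu> \<alpha>)"
      "restr X (merge (Lam - A) (merge (X - A) \<mu> \<nu>) \<beta>) = restr X (merge (X - A) \<mu> \<beta>)"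
      using assms(3) by (auto simp: restr_def merge_def)
  qed
  then have "ptrace (Lam - A) F \<sigma> \<tau>
      = (\<Sum>\<mu>\<in>configs (X - A). \<Sum>\<nu>\<in>configs (Lam - X). F (merge (X - A) \<mu> \<sigma>) (merge (X - A) \<mu> \<tau>))"
    unfolding ptrace_def split sum_configs_Un[OF fin disj] using s by (simp cong: sum.cong)
  also have "\<dots> = 2 ^ card (Lam - X) * ptrace (X - A) F \<sigma> \<tau>"
    by (simp add: ptrace_def card_configs fin sum_distrib_left)
  finally show ?thesis .
qed

lemma ptrace_bot: "ptrace S F (\<lambda>_. False) (\<lambda>_. False) = op_trace S F"
  by (simp add: ptrace_def op_trace_def merge_bot cong: sum.cong)

lemma op_trace_supported_in:
  "finite Lam \<Longrightarrow> X \<subseteq> Lam \<Longrightarrow> supported_in Lam X F \<Longrightarrow> op_trace Lam F = 2 ^ card (Lam - X) * op_trace X F"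
  using ptrace_supported_in[of Lam "{}" X F "\<lambda>_. False" "\<lambda>_. False"] by (simp add: ptrace_bot)

definition ketbra_op :: "'s set \<Rightarrow> 's set \<Rightarrow> ('s \<Rightarrow> bool) \<Rightarrow> ('s \<Rightarrow> bool) \<Rightarrow> 's qop" where
  "ketbra_op Lam A \<tau> \<sigma> = ext_op Lam A (\<lambda>\<alpha> \<beta>. if \<alpha> = \<tau> \<and> \<beta> = \<sigma> then 1 else 0)"

lemma op_mult_ketbra_op_diag:
  assumes "finite Lam" "A \<subseteq> Lam" "\<sigma> \<in> configs A" "\<gamma> \<in> configs Lam"
  shows "op_mult Lam (ketbra_op Lam A \<tau> \<sigma>) G \<gamma> \<gamma> = (if restr A \<gamma> = \<tau> then G (merge A \<sigma> \<gamma>) \<gamma> else 0)"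
proof -
  have "op_mult Lam (ketbra_op Lam A \<tau> \<sigma>) G \<gamma> \<gamma>
      = (\<Sum>\<alpha>\<in>configs Lam. if agree_outside A \<alpha> \<gamma> then (if restr A \<gamma> = \<tau> \<and> restr A \<alpha> = \<sigma> then G \<alpha> \<gamma> else 0) else 0)"
    unfolding op_mult_def ketbra_op_def
    by (intro sum.cong refl) (simp add: ext_op_eq assms(4) agree_outside_commute)
  also have "\<dots> = (\<Sum>\<nu>\<in>configs A. if restr A \<gamma> = \<tau> \<and> \<nu> = \<sigma> then G (merge A \<nu> \<gamma>) \<gamma> else 0)"
    by (simp add: sum_configs_agree_outside[OF assms(1,2,4)] restr_merge cong: sum.cong)
  also have "\<dots> = (if restr A \<gamma> = \<tau> then G (merge A \<sigma> \<gamma>) \<gamma> else 0)"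
    using assms(1-3) finite_subset[OF assms(2,1)] by (simp add: finite_configs)
  finally show ?thesis .
qed

lemma ptrace_eq_op_trace_ketbra_op:
  assumes "finite Lam" "A \<subseteq> Lam" "\<sigma> \<in> configs A" "\<tau> \<in> configs A"
  shows "ptrace (Lam - A) G \<sigma> \<tau> = op_trace Lam (op_mult Lam (ketbra_op Lam A \<tau> \<sigma>) G)"
proof -
  have split: "(Lam - A) \<union> A = Lam" and disj: "(Lam - A) \<inter> A = {}"
    using assms(2) by auto
  have fin: "finite (Lam - A)" "finite A"
    using assms(1,2) finite_subset by auto
  have cell: "op_mult Lam (ketbra_op Lam A \<tau> \<sigma>) G (merge (Lam - A) \<nu> \<beta>) (merge (Lam - A) \<nu> \<beta>)
      = (if \<beta> = \<tau> then G (merge (Lam - A) \<nu> \<sigma>) (merge (Lam - A) \<nu> \<beta>) else 0)"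
    if "\<nu> \<in> configs (Lam - A)" "\<beta> \<in> configs A" for \<nu> \<beta>
  proof -
    have "merge (Lam - A) \<nu> \<beta> \<in> configs Lam"
      using merge_in_configs[OF that] split by simp
    moreover have "restr A (merge (Lam - A) \<nu> \<beta>) = \<beta>" "merge A \<sigma> (merge (Lam - A) \<nu> \<beta>) = merge (Lam - A) \<nu> \<sigma>"
      using that assms(3) by (auto simp: restr_def merge_def configs_iff fun_eq_iff)
    ultimately show ?thesis
      by (cases "\<beta> = \<tau>") (simp_all add: op_mult_ketbra_op_diag assms(1-3))
  qed
  have "op_trace Lam (op_mult Lam (ketbra_op Lam A \<tau> \<sigma>) G)
      = (\<Sum>\<gamma>\<in>configs ((Lam - A) \<union> A). op_mult Lam (ketbra_op Lam A \<tau> \<sigma>) G \<gamma> \<gamma>)"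
    by (simp only: op_trace_def split)
  also have "\<dots> = (\<Sum>\<nu>\<in>configs (Lam - A). \<Sum>\<beta>\<in>configs A. if \<beta> = \<tau> then G (merge (Lam - A) \<nu> \<sigma>) (merge (Lam - A) \<nu> \<beta>) else 0)"
    unfolding sum_configs_Un[OF fin disj] by (simp add: cell cong: sum.cong)
  also have "\<dots> = ptrace (Lam - A) G \<sigma> \<tau>"
    using assms(4) fin by (simp add: ptrace_def finite_configs)
  finally show ?thesis ..
qed

text \<open>The qubits outside Y contribute the same factor to the partial trace and to the trace.\<close>
lemma ptrace_normalized_op_exp:
  assumes "finite Lam" "A \<subseteq> Y" "Y \<subseteq> Lam" "supported_in Lam Y P" "\<sigma> \<in> configs A" "\<tau> \<in> configs A"
  shows "ptrace (Y - A) (\<lambda>\<alpha> \<gamma>. op_exp Y P \<alpha> \<gamma> / op_trace Y (op_exp Y P)) \<sigma> \<tau>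
    = ptrace (Lam - A) (op_exp Lam P) \<sigma> \<tau> / op_trace Lam (op_exp Lam P)"
proof -
  let ?F = "op_exp Lam P"
  have F: "supported_in Lam Y ?F"
    using assms(1,3,4) by (rule supported_in_op_exp)
  have restrict: "op_exp Y P \<alpha> \<gamma> = ?F \<alpha> \<gamma>" if "\<alpha> \<in> configs Y" "\<gamma> \<in> configs Y" for \<alpha> \<gamma>
    using assms(1,3,4) that by (rule op_exp_supported_in_restrict)
  have "merge (Y - A) \<nu> \<alpha> \<in> configs Y" if "\<nu> \<in> configs (Y - A)" "\<alpha> \<in> configs A" for \<nu> \<alpha>
    using merge_in_configs[OF that] assms(2) by (simp add: Un_absorb2)
  then have "ptrace (Y - A) (\<lambda>\<alpha> \<gamma>. op_exp Y P \<alpha> \<gamma> / op_trace Y (op_exp Y P)) \<sigma> \<tau>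
      = ptrace (Y - A) ?F \<sigma> \<tau> / op_trace Y ?F"
    using assms(5,6) by (simp add: ptrace_def op_trace_def restrict sum_divide_distrib cong: sum.cong)
  also have "\<dots> = (2 ^ card (Lam - Y) * ptrace (Y - A) ?F \<sigma> \<tau>) / (2 ^ card (Lam - Y) * op_trace Y ?F)"
    by simp
  also have "\<dots> = ptrace (Lam - A) ?F \<sigma> \<tau> / op_trace Lam ?F"
    using ptrace_supported_in[OF assms(1-3) F assms(5,6)] op_trace_supported_in[OF assms(1,3) F] by simp
  finally show ?thesis .
qed

subsection \<open>Gibbs states of the parent Hamiltonian\<close>

definition contained_terms :: "site set \<Rightarrow> layer list \<Rightarrow> site set \<Rightarrow> site set" where
  "contained_terms Lam Ls Y = {i \<in> Lam. op_supp Lam (parent_term Lam Ls i) \<subseteq> Y}"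

definition gibbs_weight :: "real \<Rightarrow> 's set \<Rightarrow> ('s \<Rightarrow> bool) \<Rightarrow> real" where
  "gibbs_weight \<beta> S \<mu> = exp (- \<beta> * real (card {i \<in> S. \<mu> i}))"

lemma parent_term_eq_op_conj:
  "parent_term Lam Ls i = op_conj Lam (circuit_op Lam Ls) (diag_op Lam (\<lambda>\<mu>. if \<mu> i then 1 else 0))"
  by (simp add: parent_term_def op_conj_def proj1_eq_diag_op)

lemma H_sub_eq_op_conj:
  assumes "finite Lam"
  shows "H_sub Lam Ls Y = op_conj Lam (circuit_op Lam Ls)
    (diag_op Lam (\<lambda>\<mu>. of_nat (card {i \<in> contained_terms Lam Ls Y. \<mu> i})))"
proof (intro ext)
  fix \<sigma> \<tau>
  let ?C = "circuit_op Lam Ls" and ?S = "contained_terms Lam Ls Y"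
  have "finite ?S"
    using assms by (simp add: contained_terms_def)
  then have count: "(\<Sum>i\<in>?S. if \<mu> i then 1 else 0) = (of_nat (card {i \<in> ?S. \<mu> i}) :: complex)" for \<mu>
    by (simp add: sum.If_cases Int_def conj_commute)
  have "H_sub Lam Ls Y \<sigma> \<tau> = (\<Sum>i\<in>?S. parent_term Lam Ls i \<sigma> \<tau>)"
    by (simp add: H_sub_def contained_terms_def)
  also have "\<dots> = (\<Sum>i\<in>?S. \<Sum>\<mu>\<in>configs Lam. ?C \<sigma> \<mu> * (if \<mu> i then 1 else 0) * cnj (?C \<tau> \<mu>))"
    by (simp add: parent_term_eq_op_conj op_conj_diag_op assms)
  also have "\<dots> = (\<Sum>\<mu>\<in>configs Lam. ?C \<sigma> \<mu> * (\<Sum>i\<in>?S. if \<mu> i then 1 else 0) * cnj (?C \<tau> \<mu>))"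
    by (subst sum.swap) (simp add: sum_distrib_left sum_distrib_right)
  finally show "H_sub Lam Ls Y \<sigma> \<tau>
      = op_conj Lam ?C (diag_op Lam (\<lambda>\<mu>. of_nat (card {i \<in> ?S. \<mu> i}))) \<sigma> \<tau>"
    by (simp add: op_conj_diag_op assms count)
qed

lemma supported_in_H_sub: "finite Lam \<Longrightarrow> supported_in Lam Y (H_sub Lam Ls Y)"
  unfolding H_sub_def by (rule supported_in_sum) (auto intro: supported_in_mono[OF supported_in_op_supp])

lemma op_exp_H_sub:
  assumes "finite Lam" "\<forall>L\<in>set Ls. valid_layer Lam L" "\<sigma> \<in> configs Lam" "\<tau> \<in> configs Lam"
  shows "op_exp Lam (\<lambda>\<sigma> \<tau>. - complex_of_real \<beta> * H_sub Lam Ls Y \<sigma> \<tau>) \<sigma> \<tau>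
    = op_conj Lam (circuit_op Lam Ls) (diag_op Lam (\<lambda>\<mu>. of_real (gibbs_weight \<beta> (contained_terms Lam Ls Y) \<mu>))) \<sigma> \<tau>"
proof -
  let ?d = "\<lambda>\<mu>. complex_of_real (- \<beta> * real (card {i \<in> contained_terms Lam Ls Y. \<mu> i}))"
  have "op_exp Lam (\<lambda>\<sigma> \<tau>. - complex_of_real \<beta> * H_sub Lam Ls Y \<sigma> \<tau>) \<sigma> \<tau>
      = op_conj Lam (circuit_op Lam Ls) (diag_op Lam (\<lambda>\<mu>. exp (?d \<mu>))) \<sigma> \<tau>"
    by (rule op_exp_op_conj_diag_op[OF assms(1) unitary_on_circuit_op[OF assms(1,2)] _ assms(3,4)])
      (simp add: H_sub_eq_op_conj op_conj_diag_op assms(1) sum_distrib_left mult_ac)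
  moreover have "(\<lambda>\<mu>. exp (?d \<mu>)) = (\<lambda>\<mu>. of_real (gibbs_weight \<beta> (contained_terms Lam Ls Y) \<mu>))"
    by (simp only: gibbs_weight_def exp_of_real)
  ultimately show ?thesis
    by simp
qed

lemma ptrace_gibbs_sub_eq:
  assumes "finite Lam" "\<forall>L\<in>set Ls. valid_layer Lam L" "A \<subseteq> Y" "Y \<subseteq> Lam" "\<sigma> \<in> configs A" "\<tau> \<in> configs A"
  shows "ptrace (Y - A) (gibbs_sub Lam Ls \<beta> Y) \<sigma> \<tau>
    = (\<Sum>\<mu>\<in>configs Lam. of_real (gibbs_weight \<beta> (contained_terms Lam Ls Y) \<mu>)
         * op_conj Lam (op_adj (circuit_op Lam Ls)) (ketbra_op Lam A \<tau> \<sigma>) \<mu> \<mu>)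
      / (\<Sum>\<mu>\<in>configs Lam. of_real (gibbs_weight \<beta> (contained_terms Lam Ls Y) \<mu>))"
proof -
  let ?P = "\<lambda>\<sigma> \<tau>. - complex_of_real \<beta> * H_sub Lam Ls Y \<sigma> \<tau>"
  let ?D = "op_conj Lam (circuit_op Lam Ls) (diag_op Lam (\<lambda>\<mu>. of_real (gibbs_weight \<beta> (contained_terms Lam Ls Y) \<mu>)))"
  have F: "op_exp Lam ?P \<alpha> \<gamma> = ?D \<alpha> \<gamma>" if "\<alpha> \<in> configs Lam" "\<gamma> \<in> configs Lam" for \<alpha> \<gamma>
    using op_exp_H_sub[OF assms(1,2) that] .
  have "supported_in Lam Y ?P"
    using assms(1) by (intro supported_in_scale supported_in_H_sub)
  then have "ptrace (Y - A) (gibbs_sub Lam Ls \<beta> Y) \<sigma> \<tau> = ptrace (Lam - A) (op_exp Lam ?P) \<sigma> \<tau> / op_trace Lam (op_exp Lam ?P)"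
    unfolding gibbs_sub_def Let_def by (rule ptrace_normalized_op_exp[OF assms(1,3,4) _ assms(5,6)])
  also have "ptrace (Lam - A) (op_exp Lam ?P) \<sigma> \<tau> = op_trace Lam (op_mult Lam (ketbra_op Lam A \<tau> \<sigma>) (op_exp Lam ?P))"
    using assms by (intro ptrace_eq_op_trace_ketbra_op) auto
  also have "\<dots> = op_trace Lam (op_mult Lam (ketbra_op Lam A \<tau> \<sigma>) ?D)"
    unfolding op_trace_def op_mult_def by (intro sum.cong refl) (simp only: F)
  also have "op_trace Lam (op_exp Lam ?P) = op_trace Lam ?D"
    unfolding op_trace_def by (intro sum.cong refl) (simp only: F)
  finally show ?thesis
    using assms(1) unitary_on_circuit_op[OF assms(1,2)]
    by (simp add: op_trace_mult_op_conj_diag_op op_trace_op_conj_diag_op)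
qed

lemma gibbs_weight_merge:
  assumes "finite L" "finite M" "\<mu> \<in> configs L" "\<nu> \<in> configs M"
  shows "gibbs_weight \<beta> S (merge L \<mu> \<nu>) = gibbs_weight \<beta> (S \<inter> L) \<mu> * gibbs_weight \<beta> (S - L) \<nu>"
proof -
  have "{i \<in> S. merge L \<mu> \<nu> i} = {i \<in> S \<inter> L. \<mu> i} \<union> {i \<in> S - L. \<nu> i}"
    by (auto simp: merge_def)
  moreover have "finite {i \<in> S \<inter> L. \<mu> i}" "finite {i \<in> S - L. \<nu> i}"
    using assms by (auto intro: finite_subset[of _ L] finite_subset[of _ M] simp: configs_iff)
  ultimately have "card {i \<in> S. merge L \<mu> \<nu> i} = card {i \<in> S \<inter> L. \<mu> i} + card {i \<in> S - L. \<nu> i}"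
    by (simp add: card_Un_disjoint disjoint_iff)
  then show ?thesis
    by (simp add: gibbs_weight_def distrib_left flip: exp_add)
qed

lemma sum_gibbs_weight_factor:
  fixes k :: "('s \<Rightarrow> bool) \<Rightarrow> complex"
  assumes "finite Lam" "L \<subseteq> Lam" and k: "\<And>\<mu>. \<mu> \<in> configs Lam \<Longrightarrow> k \<mu> = k (restr L \<mu>)"
  shows "(\<Sum>\<mu>\<in>configs Lam. of_real (gibbs_weight \<beta> S \<mu>) * k \<mu>)
    = (\<Sum>\<mu>\<in>configs L. of_real (gibbs_weight \<beta> (S \<inter> L) \<mu>) * k \<mu>)
      * of_real (\<Sum>\<nu>\<in>configs (Lam - L). gibbs_weight \<beta> (S - L) \<nu>)"
proof -
  have split: "L \<union> (Lam - L) = Lam" and fin: "finite L" "finite (Lam - L)"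
    using assms(1,2) finite_subset by auto
  have "of_real (gibbs_weight \<beta> S (merge L \<mu> \<nu>)) * k (merge L \<mu> \<nu>)
      = of_real (gibbs_weight \<beta> (S \<inter> L) \<mu>) * k \<mu> * of_real (gibbs_weight \<beta> (S - L) \<nu>)"
    if "\<mu> \<in> configs L" "\<nu> \<in> configs (Lam - L)" for \<mu> \<nu>
  proof -
    have "k (merge L \<mu> \<nu>) = k \<mu>"
      using k[of "merge L \<mu> \<nu>"] merge_in_configs[OF that] split by (simp add: restr_merge that(1))
    then show ?thesis
      by (simp add: gibbs_weight_merge[OF fin that] mult_ac)
  qed
  then have "(\<Sum>\<mu>\<in>configs (L \<union> (Lam - L)). of_real (gibbs_weight \<beta> S \<mu>) * k \<mu>)
      = (\<Sum>\<mu>\<in>configs L. \<Sum>\<nu>\<in>configs (Lam - L). of_real (gibbs_weight \<beta> (S \<inter> L) \<mu>) * k \<mu> * of_real (gibbs_weight \<beta> (S - L) \<nu>))"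
    unfolding sum_configs_Un[OF fin Diff_disjoint] by (intro sum.cong refl)
  then show ?thesis
    unfolding split by (simp add: sum_product)
qed

lemma sum_gibbs_weight_pos: "finite Y \<Longrightarrow> 0 < (\<Sum>\<nu>\<in>configs Y. gibbs_weight \<beta> S \<nu>)"
  using bot_in_configs[of Y] by (intro sum_pos) (auto simp: finite_configs gibbs_weight_def simp del: bot_in_configs)

lemma ptrace_gibbs_sub_cong:
  assumes "finite Lam" "\<forall>L\<in>set Ls. valid_layer Lam L" "A \<subseteq> Y" "Y \<subseteq> Lam" "A \<subseteq> Y'" "Y' \<subseteq> Lam"
    and "contained_terms Lam Ls Y \<inter> lat_nbhd Lam (length Ls) A = contained_terms Lam Ls Y' \<inter> lat_nbhd Lam (length Ls) A"
    and "\<sigma> \<in> configs A" "\<tau> \<in> configs A"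
  shows "ptrace (Y - A) (gibbs_sub Lam Ls \<beta> Y) \<sigma> \<tau> = ptrace (Y' - A) (gibbs_sub Lam Ls \<beta> Y') \<sigma> \<tau>"
proof -
  define L where "L = lat_nbhd Lam (length Ls) A"
  define K where "K = op_conj Lam (op_adj (circuit_op Lam Ls)) (ketbra_op Lam A \<tau> \<sigma>)"
  define R where "R S = (\<Sum>\<mu>\<in>configs L. of_real (gibbs_weight \<beta> S \<mu>) * K \<mu> \<mu>)
      / (\<Sum>\<mu>\<in>configs L. of_real (gibbs_weight \<beta> S \<mu>))" for S
  have "L \<subseteq> Lam"
    by (simp add: L_def lat_nbhd_subset)
  have "supported_in Lam L K"
    unfolding K_def L_def ketbra_op_def using assms(1,2,3,4)
    by (intro supported_in_op_conj_adj_circuit supported_in_ext_op) auto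
  then have K: "K \<mu> \<mu> = K (restr L \<mu>) (restr L \<mu>)" if "\<mu> \<in> configs Lam" for \<mu>
    using supported_inD[OF _ that that] by (simp add: agree_outside_def)
  have "ptrace (Z - A) (gibbs_sub Lam Ls \<beta> Z) \<sigma> \<tau> = R (contained_terms Lam Ls Z \<inter> L)"
    if "A \<subseteq> Z" "Z \<subseteq> Lam" for Z
  proof -
    let ?S = "contained_terms Lam Ls Z"
    define c where "c = complex_of_real (\<Sum>\<nu>\<in>configs (Lam - L). gibbs_weight \<beta> (?S - L) \<nu>)"
    have "c \<noteq> 0"
      unfolding c_def of_real_eq_0_iff using sum_gibbs_weight_pos[of "Lam - L" \<beta> "?S - L"] assms(1) by simp
    have num: "(\<Sum>\<mu>\<in>configs Lam. of_real (gibbs_weight \<beta> ?S \<mu>) * K \<mu> \<mu>)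
        = (\<Sum>\<mu>\<in>configs L. of_real (gibbs_weight \<beta> (?S \<inter> L) \<mu>) * K \<mu> \<mu>) * c"
      unfolding c_def using assms(1) \<open>L \<subseteq> Lam\<close> K by (rule sum_gibbs_weight_factor)
    have den: "(\<Sum>\<mu>\<in>configs Lam. complex_of_real (gibbs_weight \<beta> ?S \<mu>))
        = (\<Sum>\<mu>\<in>configs L. of_real (gibbs_weight \<beta> (?S \<inter> L) \<mu>)) * c"
      unfolding c_def using sum_gibbs_weight_factor[OF assms(1) \<open>L \<subseteq> Lam\<close>, of "\<lambda>_. 1"] by simp
    show ?thesis
      unfolding ptrace_gibbs_sub_eq[OF assms(1,2) that assms(8,9)] K_def[symmetric] num den R_def
      using \<open>c \<noteq> 0\<close> by simp
  qed
  then show ?thesis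
    using assms(3-7) by (simp add: L_def)
qed

lemma contained_terms_Un_far:
  assumes "finite Lam" "\<forall>L\<in>set Ls. valid_layer Lam L"
    and far: "\<forall>a\<in>A. \<forall>c\<in>C'. enat (2 * length Ls + 1) \<le> lat_dist Lam a c"
  shows "contained_terms Lam Ls (Y \<union> C') \<inter> lat_nbhd Lam (length Ls) A
    = contained_terms Lam Ls Y \<inter> lat_nbhd Lam (length Ls) A"
proof (intro equalityI subsetI)
  fix i assume i: "i \<in> contained_terms Lam Ls (Y \<union> C') \<inter> lat_nbhd Lam (length Ls) A"
  then obtain a j1 where a: "a \<in> A" "j1 \<le> length Ls" "(a, i) \<in> lat_edges Lam ^^ j1"
    by (auto simp: lat_nbhd_def)
  have "i \<in> Lam" "op_supp Lam (parent_term Lam Ls i) \<subseteq> Y \<union> C'"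
    using i by (auto simp: contained_terms_def)
  have "y \<in> Y" if y: "y \<in> op_supp Lam (parent_term Lam Ls i)" for y
  proof -
    have "y \<in> lat_nbhd Lam (length Ls) {i}"
      using op_supp_parent_term[OF assms(1,2) \<open>i \<in> Lam\<close>] y by blast
    then obtain j2 where j2: "j2 \<le> length Ls" "(i, y) \<in> lat_edges Lam ^^ j2"
      by (auto simp: lat_nbhd_def)
    have "lat_dist Lam a y \<le> enat (j1 + j2)"
      using a(3) j2(2) by (intro lat_dist_le_relpow) (auto simp: relpow_add)
    also have "\<dots> < enat (2 * length Ls + 1)"
      using a(2) j2(1) by simp
    finally have "y \<notin> C'"
      using far a(1) by (meson leD)
    then show ?thesis
      using y \<open>op_supp Lam (parent_term Lam Ls i) \<subseteq> Y \<union> C'\<close> by blast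
  qed
  then show "i \<in> contained_terms Lam Ls Y \<inter> lat_nbhd Lam (length Ls) A"
    using i by (auto simp: contained_terms_def)
next
  fix i assume "i \<in> contained_terms Lam Ls Y \<inter> lat_nbhd Lam (length Ls) A"
  then show "i \<in> contained_terms Lam Ls (Y \<union> C') \<inter> lat_nbhd Lam (length Ls) A"
    by (auto simp: contained_terms_def)
qed

theorem claim5p5:
  fixes Lam :: "site set" and D d :: nat and Ls :: "layer list" and \<beta> :: real
    and A B C' :: "site set"
  assumes "finite Lam" and "\<forall>x\<in>Lam. length x = D"
    and "length Ls = d" and "\<forall>L\<in>set Ls. valid_layer Lam L"
    and "\<beta> > 0"
    and "A \<subseteq> Lam" and "B \<subseteq> Lam" and "C' \<subseteq> Lam"
    and "A \<inter> B = {}" and "A \<inter> C' = {}" and "B \<inter> C' = {}"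
    and "\<forall>a\<in>A. \<forall>c\<in>C'. lat_dist Lam a c \<ge> enat (4 * d + 1)"
  shows "\<forall>\<sigma>\<in>configs A. \<forall>\<tau>\<in>configs A.
           ptrace (B \<union> C') (gibbs_sub Lam Ls \<beta> (A \<union> B \<union> C')) \<sigma> \<tau>
         = ptrace B (gibbs_sub Lam Ls \<beta> (A \<union> B)) \<sigma> \<tau>"
proof (intro ballI)
  fix \<sigma> \<tau> assume "\<sigma> \<in> configs A" "\<tau> \<in> configs A"
  have "\<forall>a\<in>A. \<forall>c\<in>C'. enat (2 * length Ls + 1) \<le> lat_dist Lam a c"
    using assms(3,12) order_trans[of "enat (2 * d + 1)" "enat (4 * d + 1)"] by auto
  then have "contained_terms Lam Ls (A \<union> B \<union> C') \<inter> lat_nbhd Lam (length Ls) A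
      = contained_terms Lam Ls (A \<union> B) \<inter> lat_nbhd Lam (length Ls) A"
    using assms(1,4) by (intro contained_terms_Un_far)
  then have "ptrace ((A \<union> B \<union> C') - A) (gibbs_sub Lam Ls \<beta> (A \<union> B \<union> C')) \<sigma> \<tau>
      = ptrace ((A \<union> B) - A) (gibbs_sub Lam Ls \<beta> (A \<union> B)) \<sigma> \<tau>"
    using assms(1,4,6,7,8) \<open>\<sigma> \<in> configs A\<close> \<open>\<tau> \<in> configs A\<close> by (intro ptrace_gibbs_sub_cong) auto
  moreover have "(A \<union> B \<union> C') - A = B \<union> C'" "(A \<union> B) - A = B"
    using assms(9,10) by auto
  ultimately show "ptrace (B \<union> C') (gibbs_sub Lam Ls \<beta> (A \<union> B \<union> C')) \<sigma> \<tau>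
      = ptrace B (gibbs_sub Lam Ls \<beta> (A \<union> B)) \<sigma> \<tau>"
    by simp
qed

end
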